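(* Assume (SM), (LIP), (POT) and the stability axiom (A1); let $\tau:=M+3M(L[3M]/\alpha)^{1/2}$, let $i_{\min}\in\mathbb{N}$ with $q_{\mathrm{alg}}^{i_{\min}}\le1/3$, let $0<\delta<\min\{1/L[5\tau],2\alpha/L[2\tau]^2\}$, and consider the algorithm AILFEM with parameters $0<\theta\le1$, $\lambda_{\mathrm{lin}},\lambda_{\mathrm{alg}}>0$, $C_{\mathrm{mark}}\ge1$ and $|||u_0^{0,0}|||\le2M$. Let $\lambda_{\mathrm{lin}}^\star:=\min\{1,(\alpha(1-q_{\mathcal{E}}^2)/(2q_{\mathcal{E}}^2))^{1/2}/C_{\mathrm{stab}}[3M]\}$. Then, for all $(\ell,\underline{k},\underline{i})\in\mathcal{Q}$ with $\underline{k}[\ell]<\infty$, $$\eta_\ell(u_\ell^\star)\le(1+\lambda_{\mathrm{lin}}/\lambda_{\mathrm{lin}}^\star)\,\eta_\ell(u_\ell^{\underline{k},\underline{i}}),$$ and, if $0<\lambda_{\mathrm{lin}}<\lambda_{\mathrm{lin}}^\star$, moreover $$(1-\lambda_{\mathrm{lin}}/\lambda_{\mathrm{lin}}^\star)\,\eta_\ell(u_\ell^{\underline{k},\underline{i}})\le\eta_\ell(u_\ell^\star).$$ Furthermore, for $0<\lambda_{\mathrm{lin}}<\lambda_{\mathrm{lin}}^\star$ and $\theta_{\mathrm{mark}}:=(\theta^{1/2}+\lambda_{\mathrm{lin}}/\lambda_{\mathrm{lin}}^\star)^2/(1-\lambda_{\mathrm{lin}}/\lambda_{\mathrm{lin}}^\star)^2$,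 Dörfler marking for $u_\ell^\star$ with parameter $\theta_{\mathrm{mark}}$ implies Dörfler marking for $u_\ell^{\underline{k},\underline{i}}$ with parameter $\theta$: for any $\mathcal{R}_\ell\subseteq\mathcal{T}_\ell$, $$\theta_{\mathrm{mark}}\,\eta_\ell(u_\ell^\star)^2\le\eta_\ell(\mathcal{R}_\ell,u_\ell^\star)^2\implies\theta\,\eta_\ell(u_\ell^{\underline{k},\underline{i}})^2\le\eta_\ell(\mathcal{R}_\ell,u_\ell^{\underline{k},\underline{i}})^2.$$
   Context: Abstract setting. Let $\mathcal{X}$ be a real Hilbert space with scalar product $\langle\!\langle\cdot,\cdot\rangle\!\rangle$ and norm $|||\cdot|||$, with dual space $\mathcal{X}'$ (norm $\|\cdot\|_{\mathcal{X}'}$, duality bracket $\langle\cdot,\cdot\rangle$). Let $\mathcal{A}:\mathcal{X}\to\mathcal{X}'$ be a nonlinear operator and $F\in\mathcal{X}'$ with $\mathcal{A}0\neq F$. Conditions: (SM) there is $\alpha>0$ with $\alpha|||v-w|||^2\le\langle\mathcal{A}v-\mathcal{A}w,v-w\rangle$ for all $v,w\in\mathcal{X}$; (LIP) for every $\vartheta>0$ there is $L[\vartheta]>0$ with $\langle\mathcal{A}v-\mathcal{A}w,\varphi\rangle\le L[\vartheta]\,|||v-w|||\,|||\varphi|||$ for all $v,w,\varphi\in\mathcal{X}$ with $\max\{|||v|||,|||v-w|||\}\le\vartheta$; (POT) there is a Gâteaux differentiable $\mathcal{P}:\mathcal{X}\to\mathbb{R}$ with $\langle\mathcal{A}w,v\rangle=\lim_{t\to0}(\mathcal{P}(w+tv)-\mathcal{P}(w))/t$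 for all $v,w$. The energy is $\mathcal{E}(v):=\mathcal{P}(v)-F(v)$. For every closed subspace $\mathcal{Y}\subseteq\mathcal{X}$ there is a unique $u^\star_{\mathcal{Y}}\in\mathcal{Y}$ with $\langle\mathcal{A}u^\star_{\mathcal{Y}},v\rangle=F(v)$ for all $v\in\mathcal{Y}$; $u^\star:=u^\star_{\mathcal{X}}$. Put $M:=\|F-\mathcal{A}0\|_{\mathcal{X}'}/\alpha$. Meshes. $\mathcal{T}_0$ is an initial conforming simplicial triangulation; $\mathtt{refine}(\mathcal{T}_H,\mathcal{M}_H)$ is the coarsest newest-vertex-bisection (NVB) refinement of $\mathcal{T}_H$ in which all elements of $\mathcal{M}_H\subseteq\mathcal{T}_H$ are refined; $\mathbb{T}(\mathcal{T}_H)$ is the set of meshes obtained from $\mathcal{T}_H$ by finitely many NVB steps, $\mathbb{T}:=\mathbb{T}(\mathcal{T}_0)$. Each $\mathcal{T}_H\in\mathbb{T}$ is associated with a finite-dimensional subspace $\mathcal{X}_H\subset\mathcal{X}$, nested: $\mathcal{X}_H\subseteq\mathcal{X}_h$ if $\mathcal{T}_h\in\mathbb{T}(\mathcal{T}_H)$. Write $u_H^\star:=u^\star_{\mathcal{X}_H}$. Zarantonello map: for $\delta>0$, $w_H\in\mathcal{X}_H$, $\Phi_H(\delta;w_H)\in\mathcal{X}_H$ is the unique solution of $\langle\!\langle\Phi_H(\delta;w_H),v_H\rangle\!\rangle=\langle\!\langle w_H,v_H\rangle\!\rangle+\delta[F(v_H)-\langle\mathcal{A}w_H,v_H\rangle]$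 for all $v_H\in\mathcal{X}_H$. Algebraic solver: there is $0<q_{\mathrm{alg}}<1$ and for each $\mathcal{T}_H$ a map $\Psi_H:\mathcal{X}'\times\mathcal{X}_H\to\mathcal{X}_H$ such that for every $\varphi\in\mathcal{X}'$, with $w_H^\star\in\mathcal{X}_H$ solving $\langle\!\langle w_H^\star,v_H\rangle\!\rangle=\varphi(v_H)$ for all $v_H\in\mathcal{X}_H$, one has $|||w_H^\star-\Psi_H(\varphi;w_H)|||\le q_{\mathrm{alg}}|||w_H^\star-w_H|||$ for all $w_H\in\mathcal{X}_H$. One writes $\Psi_H(w_H^\star;\cdot)$ for $\Psi_H(\varphi;\cdot)$. Estimator: for $\mathcal{T}_H\in\mathbb{T}$, $T\in\mathcal{T}_H$, $v_H\in\mathcal{X}_H$ a number $\eta_H(T,v_H)\ge0$ is given; $\eta_H(\mathcal{U},v_H):=(\sum_{T\in\mathcal{U}}\eta_H(T,v_H)^2)^{1/2}$ for $\mathcal{U}\subseteq\mathcal{T}_H$ and $\eta_H(v_H):=\eta_H(\mathcal{T}_H,v_H)$. Axiom (A1) stability: for every $\vartheta>0$ there is $C_{\mathrm{stab}}[\vartheta]>0$ such that for all $\mathcal{T}_H\in\mathbb{T}$, $\mathcal{T}_h\in\mathbb{T}(\mathcal{T}_H)$, $\mathcal{U}_H\subseteq\mathcal{T}_h\cap\mathcal{T}_H$, $v_h\in\mathcal{X}_h$, $v_H\in\mathcal{X}_H$ with $\max\{|||v_h|||,|||v_h-v_H|||\}\le\vartheta$: $|\eta_h(\mathcal{U}_H,v_h)-\eta_H(\mathcal{U}_H,v_H)|\le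 C_{\mathrm{stab}}[\vartheta]\,|||v_h-v_H|||$. Index $\ell$ refers to $\mathcal{T}_\ell$, $\mathcal{X}_\ell$, $\Phi_\ell$, $\Psi_\ell$, $\eta_\ell$, $u_\ell^\star$. Algorithm AILFEM. Input: $\mathcal{T}_0$, $0<\theta\le1$, $C_{\mathrm{mark}}\ge1$, $\lambda_{\mathrm{lin}},\lambda_{\mathrm{alg}}>0$, $i_{\min}\in\mathbb{N}$, $\delta>0$, $u_0^{0,0}\in\mathcal{X}_0$ with $|||u_0^{0,0}|||\le2M$; set $u_0^{0,\star}:=u_0^{0,\underline{i}}:=u_0^{0,0}$. For $\ell=0,1,2,\dots$: (I) For $k=1,2,\dots$: set $u_\ell^{k,0}:=u_\ell^{k-1,\underline{i}}$ and $u_\ell^{k,\star}:=\Phi_\ell(\delta;u_\ell^{k-1,\underline{i}})$ (not computed). For $i=1,2,\dots$: compute $u_\ell^{k,i}:=\Psi_\ell(u_\ell^{k,\star};u_\ell^{k,i-1})$ and $\eta_\ell(u_\ell^{k,i})$; terminate the $i$-loop with $\underline{i}[\ell,k]:=i$ if $|||u_\ell^{k,i-1}-u_\ell^{k,i}|||\le\lambda_{\mathrm{alg}}[\lambda_{\mathrm{lin}}\eta_\ell(u_\ell^{k,i})+|||u_\ell^{k,i}-u_\ell^{k,0}|||]$ and $i_{\min}\le i$. Write $u_\ell^{k,\underline{i}}:=u_\ell^{k,\underline{i}[\ell,k]}$. Terminate the $k$-loop with $\underline{k}[\ell]:=k$ if $\mathcal{E}(u_\ell^{k,0})-\mathcal{E}(u_\ell^{k,\underline{i}})\le\lambda_{\mathrm{lin}}^2\eta_\ell(u_\ell^{k,\underline{i}})^2$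 and $|||u_\ell^{k,\underline{i}}|||\le2M$. (II) Choose $\mathcal{M}_\ell\subseteq\mathcal{T}_\ell$ with $\theta\,\eta_\ell(u_\ell^{\underline{k},\underline{i}})^2\le\eta_\ell(\mathcal{M}_\ell,u_\ell^{\underline{k},\underline{i}})^2$ and $\#\mathcal{M}_\ell\le C_{\mathrm{mark}}\min\{\#\mathcal{U}:\mathcal{U}\subseteq\mathcal{T}_\ell,\ \theta\eta_\ell(u_\ell^{\underline{k},\underline{i}})^2\le\eta_\ell(\mathcal{U},u_\ell^{\underline{k},\underline{i}})^2\}$. (III) $\mathcal{T}_{\ell+1}:=\mathtt{refine}(\mathcal{T}_\ell,\mathcal{M}_\ell)$ and $u_{\ell+1}^{0,0}:=u_{\ell+1}^{0,\underline{i}}:=u_{\ell+1}^{0,\star}:=u_\ell^{\underline{k},\underline{i}}$. Index set: $\mathcal{Q}:=\{(\ell,k,i)\in\mathbb{N}_0^3: u_\ell^{k,i}\text{ is used in the algorithm}\}$; $\underline{k}[\ell]:=\sup\{k\in\mathbb{N}:(\ell,k,0)\in\mathcal{Q}\}$; $u_\ell^{\underline{k},\underline{i}}$ denotes the final iterate $u_\ell^{\underline{k}[\ell],\underline{i}[\ell,\underline{k}[\ell]]}$. $q_{\mathcal{E}}=q_{\mathcal{E}}[\delta,\tau]\in(0,1)$ is defined by $q_{\mathcal{E}}^2:=1-(1/\delta-L[5\tau])(1-q_{\mathrm{alg}}^{i_{\min}})^2\delta^2\alpha^2/L[2\tau]$. *)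

theory Defs
  imports "HOL-Analysis.Analysis"
begin

text \<open>Elements of the dual X' are represented by
 bounded linear functionals of type 'a => real; the dual norm is onorm.
 The operator A maps v to the functional A v (so A v w is the duality bracket <A v, w>).\<close>

definition galerkin_sol :: "('a::real_inner \<Rightarrow> 'a \<Rightarrow> real) \<Rightarrow> ('a \<Rightarrow> real) \<Rightarrow> 'a set \<Rightarrow> 'a" where
  "galerkin_sol A F Y = (THE u. u \<in> Y \<and> (\<forall>v\<in>Y. A u v = F v))"

definition riesz_sol :: "'a::real_inner set \<Rightarrow> ('a \<Rightarrow> real) \<Rightarrow> 'a" where
  "riesz_sol Y phi = (THE w. w \<in> Y \<and> (\<forall>v\<in>Y. inner w v = phi v))"

definition zar_rhs :: "('a::real_inner \<Rightarrow> 'a \<Rightarrow> real) \<Rightarrow> ('a \<Rightarrow> real) \<Rightarrow> real \<Rightarrow> 'a \<Rightarrow> ('a \<Rightarrow> real)" where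
  "zar_rhs A F delta w = (\<lambda>v. inner w v + delta * (F v - A w v))"

definition zarantonello :: "('a::real_inner \<Rightarrow> 'a \<Rightarrow> real) \<Rightarrow> ('a \<Rightarrow> real) \<Rightarrow> 'a set \<Rightarrow> real \<Rightarrow> 'a \<Rightarrow> 'a" where
  "zarantonello A F Y delta w = riesz_sol Y (zar_rhs A F delta w)"

definition eta_set :: "('m \<Rightarrow> 't \<Rightarrow> 'a \<Rightarrow> real) \<Rightarrow> 'm \<Rightarrow> 't set \<Rightarrow> 'a \<Rightarrow> real" where
  "eta_set eta H U v = sqrt (\<Sum>T\<in>U. (eta H T v)\<^sup>2)"

inductive refines :: "('m \<Rightarrow> 't set \<Rightarrow> 'm) \<Rightarrow> ('m \<Rightarrow> 't set) \<Rightarrow> 'm \<Rightarrow> 'm \<Rightarrow> bool"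
  for refine elems where
  refl: "refines refine elems T T"
| step: "refines refine elems T T' \<Longrightarrow> M \<subseteq> elems T' \<Longrightarrow> refines refine elems T (refine T' M)"

text \<open>A (terminated up to level L) run of algorithm AILFEM. Outputs: meshes Tm l, marked sets
 Mk l, iterates u l k i, stopping indices kbar l and ibar l k (with ibar l 0 = 0 so that
 u l 0 (ibar l 0) = u l 0 0). All levels l \<le> L have finite kbar l.\<close>
definition ailfem_run ::
  "'m \<Rightarrow> ('m \<Rightarrow> 't set) \<Rightarrow> ('m \<Rightarrow> 't set \<Rightarrow> 'm) \<Rightarrow> ('m \<Rightarrow> 't \<Rightarrow> 'a::real_inner \<Rightarrow> real)
   \<Rightarrow> ('m \<Rightarrow> ('a \<Rightarrow> real) \<Rightarrow> 'a \<Rightarrow> 'a)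
   \<Rightarrow> ('a \<Rightarrow> 'a \<Rightarrow> real) \<Rightarrow> ('a \<Rightarrow> real) \<Rightarrow> ('a \<Rightarrow> real)
   \<Rightarrow> real \<Rightarrow> real \<Rightarrow> real \<Rightarrow> real \<Rightarrow> real \<Rightarrow> nat \<Rightarrow> real \<Rightarrow> 'a
   \<Rightarrow> (nat \<Rightarrow> 'm) \<Rightarrow> (nat \<Rightarrow> 't set) \<Rightarrow> (nat \<Rightarrow> nat \<Rightarrow> nat \<Rightarrow> 'a) \<Rightarrow> (nat \<Rightarrow> nat) \<Rightarrow> (nat \<Rightarrow> nat \<Rightarrow> nat)
   \<Rightarrow> nat \<Rightarrow> bool" where
  "ailfem_run T0 elems refine eta Psi A F P delta theta Cmark lam_lin lam_alg imin Mb u00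
      Tm Mk u kbar ibar L \<longleftrightarrow>
    (let E = (\<lambda>v. P v - F v);
         est = (\<lambda>l v. eta_set eta (Tm l) (elems (Tm l)) v);
         fin = (\<lambda>l. u l (kbar l) (ibar l (kbar l)))
     in
    Tm 0 = T0 \<and> u 0 0 0 = u00 \<and>
    (\<forall>l<L. u (Suc l) 0 0 = fin l) \<and>
    (\<forall>l\<le>L. ibar l 0 = 0 \<and> 1 \<le> kbar l \<and>
       (\<forall>k\<in>{1..kbar l}.
          u l k 0 = u l (k - 1) (ibar l (k - 1)) \<and> 1 \<le> ibar l k \<and>
          (\<forall>i\<in>{1..ibar l k}.
             u l k i = Psi (Tm l) (zar_rhs A F delta (u l (k - 1) (ibar l (k - 1)))) (u l k (i - 1))) \<and>
          (\<forall>i\<in>{1..ibar l k}.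
             (norm (u l k (i - 1) - u l k i) \<le> lam_alg * (lam_lin * est l (u l k i) + norm (u l k i - u l k 0))
              \<and> imin \<le> i) \<longleftrightarrow> i = ibar l k)) \<and>
       (\<forall>k\<in>{1..kbar l}.
          (E (u l k 0) - E (u l k (ibar l k)) \<le> lam_lin\<^sup>2 * (est l (u l k (ibar l k)))\<^sup>2
           \<and> norm (u l k (ibar l k)) \<le> 2 * Mb) \<longleftrightarrow> k = kbar l)) \<and>
    (\<forall>l<L.
       Mk l \<subseteq> elems (Tm l) \<and>
       theta * (est l (fin l))\<^sup>2 \<le> (eta_set eta (Tm l) (Mk l) (fin l))\<^sup>2 \<and>
       real (card (Mk l)) \<le> Cmark * real (Min {card U | U. U \<subseteq> elems (Tm l) \<and>
            theta * (est l (fin l))\<^sup>2 \<le> (eta_set eta (Tm l) U (fin l))\<^sup>2}) \<and>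
       Tm (Suc l) = refine (Tm l) (Mk l)))"

end

theory Submission
  imports Defs
begin

(*
  On the final mesh the outer iterates of AILFEM are inexact Zarantonello steps
  u |-> Phi(delta; u) for the discrete problem. Strong monotonicity and the local
  Lipschitz bound make every such step contract the energy error E(u) - E(u_star) by
  the factor q_E^2, provided the iterate lies within distance tau of u_star; this
  holds throughout, since the energy decreases and the first iterate has norm at
  most 2M. Contraction converts the energy decrease of the last outer step, which the
  stopping criterion bounds by lam_lin^2 eta^2, into the error bound
  Cstab |||u_star - u||| <= (lam_lin / lam_lin_star) eta(u). By the stability
  axiom (A1) this perturbs eta(U, .) by at most that amount for every set U of
  elements, which yields both estimator equivalences and the transfer of Doerfler
  marking from u_star to u.
*)

lemma power2_le_mult_imp_le:
  fixes x c :: real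
  assumes "x\<^sup>2 \<le> c * x" and "0 \<le> c"
  shows "x \<le> c"
proof (rule ccontr)
  assume "\<not> x \<le> c"
  then have "c * x < x * x" using assms(2) by (intro mult_strict_right_mono) auto
  then show False using assms(1) by (simp add: power2_eq_square)
qed

lemma riesz_representation_span:
  fixes B :: "'a::real_inner set"
  assumes "finite B" and "linear phi"
  shows "\<exists>w\<in>span B. \<forall>v\<in>span B. inner w v = phi v"
  using assms
proof (induction B arbitrary: phi rule: finite_induct)
  case empty
  then show ?case by (auto simp: real_vector.linear_0)
next
  case (insert b B)
  obtain p where p: "p \<in> span B" "\<forall>v\<in>span B. inner p v = inner b v"
    using insert.IH[of "inner b"] by (auto intro: bounded_linear.linear bounded_linear_inner_right)
  obtain w where w: "w \<in> span B" "\<forall>v\<in>span B. inner w v = phi v"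
    using insert.IH insert.prems by blast
  define c where "c = b - p"
  have c_orth: "inner c v = 0" if "v \<in> span B" for v
    using p that by (simp add: c_def inner_diff_left)
  show ?case
  proof (cases "c = 0")
    case True
    then have "span (insert b B) = span B"
      using p(1) by (simp add: c_def span_redundant)
    then show ?thesis using w by auto
  next
    case False
    define t where "t = phi c / inner c c"
    show ?thesis
    proof (intro bexI ballI)
      show "w + t *\<^sub>R c \<in> span (insert b B)"
        using w(1) p(1) unfolding c_def
        by (intro span_add span_scale span_diff) (auto intro: span_base span_mono[THEN subsetD])
      fix v assume "v \<in> span (insert b B)"
      then obtain k where "v - k *\<^sub>R b \<in> span B"
        by (auto simp: span_insert)
      define y where "y = v - k *\<^sub>R c"
      have v: "v = y + k *\<^sub>R c" by (simp add: y_def)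
      have "y = (v - k *\<^sub>R b) + k *\<^sub>R p"
        by (simp add: y_def c_def algebra_simps)
      then have y: "y \<in> span B"
        using \<open>v - k *\<^sub>R b \<in> span B\<close> p(1) by (simp add: span_add span_scale)
      have "inner (w + t *\<^sub>R c) v = inner w y + k * inner w c + t * inner c y + t * k * inner c c"
        by (simp add: v algebra_simps)
      also have "\<dots> = phi y + k * phi c"
        using w(2) y c_orth[OF y] c_orth[OF w(1)] False by (simp add: t_def inner_commute[of w c])
      also have "\<dots> = phi v"
        using insert.prems by (simp add: v real_vector.linear_add linear_cmul)
      finally show "inner (w + t *\<^sub>R c) v = phi v" .
    qed
  qed
qed

lemma riesz_sol_span:
  fixes B :: "'a::real_inner set"
  assumes "finite B" and "linear phi"
  shows "riesz_sol (span B) phi \<in> span B"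
    and "v \<in> span B \<Longrightarrow> inner (riesz_sol (span B) phi) v = phi v"
proof -
  have "\<exists>!w. w \<in> span B \<and> (\<forall>v\<in>span B. inner w v = phi v)"
  proof (rule ex_ex1I)
    show "\<exists>w. w \<in> span B \<and> (\<forall>v\<in>span B. inner w v = phi v)"
      using riesz_representation_span[OF assms] by blast
  next
    fix w w'
    assume "w \<in> span B \<and> (\<forall>v\<in>span B. inner w v = phi v)"
      and "w' \<in> span B \<and> (\<forall>v\<in>span B. inner w' v = phi v)"
    moreover from this have "w - w' \<in> span B" by (simp add: span_diff)
    ultimately have "inner (w - w') (w - w') = 0"
      by (simp add: inner_diff_left)
    then show "w = w'" by simp
  qed
  then have "riesz_sol (span B) phi \<in> span B \<and>
      (\<forall>v\<in>span B. inner (riesz_sol (span B) phi) v = phi v)"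
    unfolding riesz_sol_def by (rule theI')
  then show "riesz_sol (span B) phi \<in> span B"
    and "v \<in> span B \<Longrightarrow> inner (riesz_sol (span B) phi) v = phi v"
    by auto
qed

lemma closed_span_finite:
  fixes B :: "'a::real_inner set"
  assumes "finite B"
  shows "closed (span B)"
  unfolding closed_sequential_limits
proof (intro allI impI)
  fix x :: "nat \<Rightarrow> 'a" and l
  assume x: "(\<forall>n. x n \<in> span B) \<and> x \<longlonglongrightarrow> l"
  \<comment> \<open>the Riesz representative p of inner l is the orthogonal projection of l onto span B\<close>
  define p where "p = riesz_sol (span B) (inner l)"
  have lin: "linear (inner l)"
    by (simp add: bounded_linear.linear bounded_linear_inner_right)
  have p: "p \<in> span B" "\<And>v. v \<in> span B \<Longrightarrow> inner p v = inner l v"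
    using riesz_sol_span[OF assms lin] unfolding p_def by auto
  have "inner (l - p) (l - x n) = inner (l - p) (l - p)" for n
  proof -
    have "inner (l - p) (x n - p) = 0"
      using p x by (simp add: span_diff inner_diff_left)
    then show ?thesis by (simp add: algebra_simps)
  qed
  moreover have "(\<lambda>n. inner (l - p) (l - x n)) \<longlonglongrightarrow> inner (l - p) (l - l)"
    using x by (intro tendsto_intros) auto
  ultimately have "inner (l - p) (l - p) = 0"
    by (simp add: LIMSEQ_const_iff)
  then show "l \<in> span B" using p(1) by simp
qed

lemma zar_rhs_bounded_linear:
  assumes "bounded_linear (A w)" and "bounded_linear F"
  shows "bounded_linear (zar_rhs A F delta w)"
  unfolding zar_rhs_def using assms
  by (intro bounded_linear_add bounded_linear_inner_right bounded_linear_const_mult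
      bounded_linear_sub)

lemma deriv_ge_affine_imp_increment_ge:
  fixes g g' :: "real \<Rightarrow> real"
  assumes "\<And>t. (g has_real_derivative g' t) (at t)"
    and "\<And>t. 0 \<le> t \<Longrightarrow> t \<le> 1 \<Longrightarrow> a + c * t \<le> g' t"
  shows "a + c / 2 \<le> g 1 - g 0"
proof -
  let ?h = "\<lambda>t. g t - a * t - c * t\<^sup>2 / 2"
  have "?h 0 \<le> ?h 1"
  proof (rule DERIV_nonneg_imp_nondecreasing[where f = ?h])
    fix t :: real assume "0 \<le> t" "t \<le> 1"
    have "(?h has_real_derivative g' t - a - c * t) (at t)"
      by (rule derivative_eq_intros assms(1) refl | simp)+
    moreover have "g' t - a - c * t \<ge> 0"
      using assms(2)[OF \<open>0 \<le> t\<close> \<open>t \<le> 1\<close>] by simp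
    ultimately show "\<exists>y. (?h has_real_derivative y) (at t) \<and> y \<ge> 0" by blast
  qed simp
  then show ?thesis by simp
qed

lemma deriv_le_affine_imp_increment_le:
  fixes g g' :: "real \<Rightarrow> real"
  assumes "\<And>t. (g has_real_derivative g' t) (at t)"
    and "\<And>t. 0 \<le> t \<Longrightarrow> t \<le> 1 \<Longrightarrow> g' t \<le> a + c * t"
  shows "g 1 - g 0 \<le> a + c / 2"
proof -
  have "- a + - c / 2 \<le> - g 1 - - g 0"
  proof (rule deriv_ge_affine_imp_increment_ge[where g = "\<lambda>t. - g t" and g' = "\<lambda>t. - g' t"])
    show "((\<lambda>t. - g t) has_real_derivative - g' t) (at t)" for t
      using assms(1) by (rule DERIV_minus)
    show "- a + - c * t \<le> - g' t" if "0 \<le> t" "t \<le> 1" for t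
      using assms(2)[OF that] by simp
  qed
  then show ?thesis by simp
qed

lemma norm_segment_le:
  fixes x y :: "'a::real_normed_vector"
  assumes "0 \<le> t" "t \<le> 1" "norm x \<le> r" "norm y \<le> r"
  shows "norm (x + t *\<^sub>R (y - x)) \<le> r"
proof -
  have "norm (x + t *\<^sub>R (y - x)) = norm ((1 - t) *\<^sub>R x + t *\<^sub>R y)"
    by (simp add: algebra_simps)
  also have "\<dots> \<le> (1 - t) * norm x + t * norm y"
    using assms(1,2) by (metis abs_of_nonneg diff_ge_0_iff_ge norm_scaleR norm_triangle_ineq)
  also have "\<dots> \<le> (1 - t) * r + t * r"
    using assms by (intro add_mono mult_left_mono) auto
  finally show ?thesis by (simp add: algebra_simps)
qed

lemma mult_le_div_min_one:
  fixes S C x y :: real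
  assumes "S * x \<le> y" "0 < S" "0 < C" "0 \<le> y"
  shows "C * x \<le> y / min 1 (S / C)"
proof -
  have "C * x \<le> y / (S / C)"
    using assms by (simp add: field_simps)
  also have "\<dots> \<le> y / min 1 (S / C)"
    using assms by (intro divide_left_mono) auto
  finally show ?thesis .
qed

lemma doerfler_marking_transfer:
  fixes est_star est :: "'t set \<Rightarrow> real"
  assumes stab: "\<And>U. U \<subseteq> T \<Longrightarrow> \<bar>est_star U - est U\<bar> \<le> a * est T"
    and R: "R \<subseteq> T" and nonneg: "0 \<le> est T" "0 \<le> est_star R" "0 \<le> theta"
    and a: "0 \<le> a" "a < 1"
    and mark: "((sqrt theta + a) / (1 - a))\<^sup>2 * (est_star T)\<^sup>2 \<le> (est_star R)\<^sup>2"
  shows "theta * (est T)\<^sup>2 \<le> (est R)\<^sup>2"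
proof -
  have "((sqrt theta + a) / (1 - a) * est_star T)\<^sup>2 \<le> (est_star R)\<^sup>2"
    using mark by (simp only: power_mult_distrib)
  then have "(sqrt theta + a) / (1 - a) * est_star T \<le> est_star R"
    by (rule power2_le_imp_le) (use nonneg in simp)
  then have "(sqrt theta + a) * est_star T \<le> (1 - a) * est_star R"
    using a by (simp add: field_simps)
  moreover have "(1 - a) * est T \<le> est_star T"
    using stab[of T] by (simp add: algebra_simps)
  then have "(sqrt theta + a) * ((1 - a) * est T) \<le> (sqrt theta + a) * est_star T"
    using nonneg a by (intro mult_left_mono) auto
  moreover have "est_star R \<le> est R + a * est T"
    using stab[OF R] by simp
  then have "(1 - a) * est_star R \<le> (1 - a) * (est R + a * est T)"
    using a by (intro mult_left_mono) auto
  ultimately have "(1 - a) * ((sqrt theta + a) * est T) \<le> (1 - a) * (est R + a * est T)"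
    by (simp add: algebra_simps)
  then have "(sqrt theta + a) * est T \<le> est R + a * est T"
    using a by (simp add: mult_le_cancel_left_pos)
  then have "sqrt theta * est T \<le> est R"
    by (simp add: algebra_simps)
  then have "(sqrt theta * est T)\<^sup>2 \<le> (est R)\<^sup>2"
    by (rule power_mono) (use nonneg in simp)
  then show ?thesis
    using nonneg by (simp add: power_mult_distrib)
qed

locale strongly_monotone_operator =
  fixes A :: "'a::{real_inner, complete_space} \<Rightarrow> 'a \<Rightarrow> real"
    and F :: "'a \<Rightarrow> real" and alpha :: real and Lip :: "real \<Rightarrow> real"
  assumes A_dual: "\<And>v. bounded_linear (A v)"
    and F_dual: "bounded_linear F"
    and A0_neq_F: "A 0 \<noteq> F"
    and alpha_pos: "alpha > 0"
    and SM: "\<And>v w. alpha * (norm (v - w))\<^sup>2 \<le> A v (v - w) - A w (v - w)"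
    and LIP: "\<And>th. th > 0 \<Longrightarrow> Lip th > 0 \<and>
       (\<forall>v w phi. max (norm v) (norm (v - w)) \<le> th \<longrightarrow>
          A v phi - A w phi \<le> Lip th * norm (v - w) * norm phi)"
begin

lemma Lip_pos: "th > 0 \<Longrightarrow> Lip th > 0"
  using LIP by blast

lemma Lip_bound:
  "th > 0 \<Longrightarrow> max (norm v) (norm (v - w)) \<le> th \<Longrightarrow>
    A v phi - A w phi \<le> Lip th * norm (v - w) * norm phi"
  using LIP by blast

lemma A_scaleR: "A v (c *\<^sub>R x) = c * A v x"
  using A_dual[of v] by (simp add: linear_simps)

lemma F_add: "F (x + y) = F x + F y"
  and F_scaleR: "F (c *\<^sub>R x) = c * F x"
  using F_dual by (simp_all add: linear_simps)

lemma residual_bounded_linear: "bounded_linear (\<lambda>v. F v - A 0 v)"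
  by (rule bounded_linear_sub[OF F_dual A_dual])

definition M_sol :: real where
  "M_sol = onorm (\<lambda>v. F v - A 0 v) / alpha"

lemma residual_bound: "F v - A 0 v \<le> alpha * M_sol * norm v"
proof -
  have "\<bar>F v - A 0 v\<bar> \<le> onorm (\<lambda>v. F v - A 0 v) * norm v"
    using onorm[OF residual_bounded_linear] by simp
  then show ?thesis using alpha_pos by (simp add: M_sol_def)
qed

lemma M_sol_pos: "M_sol > 0"
proof -
  have "\<not> (\<forall>v. F v - A 0 v = 0)"
    using A0_neq_F by auto
  then show ?thesis
    using alpha_pos onorm_pos_lt[OF residual_bounded_linear] unfolding M_sol_def by auto
qed

lemma alpha_le_Lip:
  assumes "th > 0"
  shows "alpha \<le> Lip th"
proof -
  obtain v0 where "A 0 v0 \<noteq> F v0"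
    using A0_neq_F by auto
  then have "v0 \<noteq> 0"
    using A_scaleR[of 0 0 0] F_scaleR[of 0 0] by auto
  define y where "y = (th / norm v0) *\<^sub>R v0"
  have ny: "norm y = th" unfolding y_def using \<open>v0 \<noteq> 0\<close> assms by simp
  have "alpha * th\<^sup>2 \<le> A y (y - 0) - A 0 (y - 0)" using SM[of y 0] ny by simp
  also have "\<dots> \<le> Lip th * th\<^sup>2"
    using Lip_bound[OF assms, of y 0 "y - 0"] ny by (simp add: power2_eq_square)
  finally show ?thesis using assms by simp
qed

lemma zarantonello_span:
  assumes "finite B"
  shows "zarantonello A F (span B) d w \<in> span B"
    and "v \<in> span B \<Longrightarrow>
      inner (zarantonello A F (span B) d w) v = inner w v + d * (F v - A w v)"
  using riesz_sol_span[OF assms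
      bounded_linear.linear[OF zar_rhs_bounded_linear[of A w F d, OF A_dual F_dual]]]
  unfolding zarantonello_def zar_rhs_def by auto

lemma zarantonello_lipschitz:
  assumes B: "finite B" and "v \<in> span B" "w \<in> span B"
    and th: "th > 0" "max (norm v) (norm (v - w)) \<le> th" and "d > 0"
  shows "(norm (zarantonello A F (span B) d v - zarantonello A F (span B) d w))\<^sup>2
    \<le> (1 - 2 * d * alpha + d\<^sup>2 * (Lip th)\<^sup>2) * (norm (v - w))\<^sup>2"
proof -
  let ?Phi = "zarantonello A F (span B) d"
  \<comment> \<open>rho is the Riesz representative of A v - A w on span B\<close>
  define rho where "rho = ((v - w) - (?Phi v - ?Phi w)) /\<^sub>R d"
  have rho_span: "rho \<in> span B"
    unfolding rho_def using assms zarantonello_span(1)[OF B] by (intro span_scale span_diff) auto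
  have rho: "inner rho y = A v y - A w y" if "y \<in> span B" for y
  proof -
    have "inner (?Phi v - ?Phi w) y = inner (v - w) y - d * (A v y - A w y)"
      using zarantonello_span(2)[OF B that, of d v] zarantonello_span(2)[OF B that, of d w]
      by (simp add: algebra_simps)
    then show ?thesis
      using \<open>d > 0\<close> by (simp add: rho_def inner_diff_left)
  qed
  have Phi_diff: "?Phi v - ?Phi w = (v - w) - d *\<^sub>R rho"
    unfolding rho_def using \<open>d > 0\<close> by simp
  have "alpha * (norm (v - w))\<^sup>2 \<le> inner rho (v - w)"
    using rho[of "v - w"] SM[of v w] assms by (simp add: span_diff)
  then have monotone: "2 * d * (alpha * (norm (v - w))\<^sup>2) \<le> 2 * d * inner rho (v - w)"
    using \<open>d > 0\<close> by (intro mult_left_mono) auto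
  have "norm rho \<le> Lip th * norm (v - w)"
  proof -
    have "(norm rho)\<^sup>2 \<le> Lip th * norm (v - w) * norm rho"
      using rho[OF rho_span] Lip_bound[OF th, of rho] by (simp add: power2_norm_eq_inner)
    then show ?thesis
      by (rule power2_le_mult_imp_le) (use Lip_pos[OF th(1)] in simp)
  qed
  then have "(norm rho)\<^sup>2 \<le> (Lip th * norm (v - w))\<^sup>2"
    by (intro power_mono) auto
  then have lipschitz: "d\<^sup>2 * (norm rho)\<^sup>2 \<le> d\<^sup>2 * ((Lip th)\<^sup>2 * (norm (v - w))\<^sup>2)"
    by (intro mult_left_mono) (auto simp: power_mult_distrib)
  have "(norm (?Phi v - ?Phi w))\<^sup>2
      = (norm (v - w))\<^sup>2 - 2 * d * inner rho (v - w) + d\<^sup>2 * (norm rho)\<^sup>2"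
    unfolding Phi_diff power2_norm_eq_inner
    by (simp add: inner_commute power2_eq_square algebra_simps)
  also have "\<dots> \<le> (norm (v - w))\<^sup>2 - 2 * d * (alpha * (norm (v - w))\<^sup>2)
      + d\<^sup>2 * ((Lip th)\<^sup>2 * (norm (v - w))\<^sup>2)"
    using monotone lipschitz by linarith
  also have "\<dots> = (1 - 2 * d * alpha + d\<^sup>2 * (Lip th)\<^sup>2) * (norm (v - w))\<^sup>2"
    by (simp add: algebra_simps)
  finally show ?thesis .
qed

abbreviation u_star :: "'a set \<Rightarrow> 'a" where
  "u_star B \<equiv> galerkin_sol A F (span B)"

lemma zarantonello_contraction:
  assumes B: "finite B" and R: "R > 0"
    and v: "v \<in> span B \<inter> cball 0 R" and w: "w \<in> span B \<inter> cball 0 R"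
  defines "Lc \<equiv> Lip (2 * R)"
  shows "norm (zarantonello A F (span B) (alpha / Lc\<^sup>2) v - zarantonello A F (span B) (alpha / Lc\<^sup>2) w)
    \<le> sqrt (1 - (alpha / Lc)\<^sup>2) * norm (v - w)"
proof -
  let ?Phi = "zarantonello A F (span B) (alpha / Lc\<^sup>2)"
  have Lc: "0 < Lc" "alpha \<le> Lc"
    unfolding Lc_def using Lip_pos alpha_le_Lip R by auto
  have ratio: "(alpha / Lc)\<^sup>2 \<le> 1" using Lc alpha_pos by (simp add: power_le_one)
  have "max (norm v) (norm (v - w)) \<le> 2 * R"
    using v w R norm_triangle_ineq4[of v w] by auto
  then have "(norm (?Phi v - ?Phi w))\<^sup>2
      \<le> (1 - 2 * (alpha / Lc\<^sup>2) * alpha + (alpha / Lc\<^sup>2)\<^sup>2 * Lc\<^sup>2) * (norm (v - w))\<^sup>2"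
    unfolding Lc_def using v w R alpha_pos Lc by (intro zarantonello_lipschitz[OF B]) (auto simp: Lc_def)
  also have "1 - 2 * (alpha / Lc\<^sup>2) * alpha + (alpha / Lc\<^sup>2)\<^sup>2 * Lc\<^sup>2
      = (sqrt (1 - (alpha / Lc)\<^sup>2))\<^sup>2"
  proof -
    have "(sqrt (1 - (alpha / Lc)\<^sup>2))\<^sup>2 = 1 - (alpha / Lc)\<^sup>2" using ratio by simp
    then show ?thesis using Lc by (simp add: power2_eq_square field_simps)
  qed
  finally have "(norm (?Phi v - ?Phi w))\<^sup>2 \<le> (sqrt (1 - (alpha / Lc)\<^sup>2) * norm (v - w))\<^sup>2"
    by (simp add: power_mult_distrib)
  then show ?thesis
    by (rule power2_le_imp_le) (use ratio in simp)
qed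

lemma norm_zarantonello_zero_le:
  assumes B: "finite B" and "d > 0"
  shows "norm (zarantonello A F (span B) d 0) \<le> d * alpha * M_sol"
proof -
  let ?z = "zarantonello A F (span B) d 0"
  have "(norm ?z)\<^sup>2 = d * (F ?z - A 0 ?z)"
    using zarantonello_span(2)[OF B zarantonello_span(1)[OF B], of d 0]
    by (simp add: power2_norm_eq_inner)
  also have "\<dots> \<le> (d * alpha * M_sol) * norm ?z"
    using mult_left_mono[OF residual_bound[of ?z], of d] \<open>d > 0\<close> by (simp add: mult.assoc)
  finally show ?thesis
    by (rule power2_le_mult_imp_le) (use \<open>d > 0\<close> alpha_pos M_sol_pos in simp)
qed

lemma galerkin_exists:
  assumes B: "finite B"
  shows "\<exists>u\<in>span B. \<forall>v\<in>span B. A u v = F v"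
proof -
  \<comment> \<open>Banach's fixed point theorem for the Zarantonello map on the ball of radius 2 M_sol\<close>
  define R where "R = 2 * M_sol"
  define Lc where "Lc = Lip (2 * R)"
  define d where "d = alpha / Lc\<^sup>2"
  define r where "r = (alpha / Lc)\<^sup>2"
  define f where "f = zarantonello A F (span B) d"
  define S where "S = span B \<inter> cball 0 R"
  have R: "R > 0" using M_sol_pos by (simp add: R_def)
  have Lc: "0 < Lc" "alpha \<le> Lc"
    unfolding Lc_def using Lip_pos alpha_le_Lip R by auto
  have r: "0 < r" "r \<le> 1" unfolding r_def using Lc alpha_pos by (auto simp: power_le_one)
  have kappa: "0 \<le> sqrt (1 - r)" "sqrt (1 - r) < 1" "sqrt (1 - r) \<le> 1 - r / 2"
  proof -
    show "0 \<le> sqrt (1 - r)" "sqrt (1 - r) < 1" using r by auto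
    have "(1 - r / 2)\<^sup>2 = 1 - r + (r / 2)\<^sup>2" by (simp add: power2_eq_square algebra_simps)
    then have "sqrt (1 - r) \<le> sqrt ((1 - r / 2)\<^sup>2)"
      by (intro real_sqrt_le_mono) simp
    then show "sqrt (1 - r) \<le> 1 - r / 2" using r by simp
  qed
  have contr: "norm (f v - f w) \<le> sqrt (1 - r) * norm (v - w)" if "v \<in> S" "w \<in> S" for v w
    using zarantonello_contraction[OF B R] that unfolding f_def d_def r_def Lc_def S_def by blast
  have "0 \<in> S" unfolding S_def using R by (simp add: span_zero)
  have maps: "f ` S \<subseteq> S"
  proof
    fix y assume "y \<in> f ` S"
    then obtain w where w: "w \<in> S" "y = f w" by blast
    have "norm (f w) \<le> norm (f w - f 0) + norm (f 0)"
      using norm_triangle_ineq[of "f w - f 0" "f 0"] by simp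
    also have "\<dots> \<le> sqrt (1 - r) * norm w + d * alpha * M_sol"
      using contr[OF w(1) \<open>0 \<in> S\<close>] norm_zarantonello_zero_le[OF B, of d] Lc alpha_pos
      by (simp add: f_def d_def)
    also have "\<dots> \<le> (1 - r / 2) * R + d * alpha * M_sol"
      using w(1) kappa unfolding S_def by (intro add_right_mono mult_mono) auto
    also have "\<dots> = R"
    proof -
      have "d * alpha = r" using Lc unfolding d_def r_def by (simp add: power2_eq_square)
      then show ?thesis unfolding R_def by (simp add: algebra_simps)
    qed
    finally show "y \<in> S"
      using w zarantonello_span(1)[OF B] unfolding S_def f_def by auto
  qed
  have "complete S"
    unfolding S_def using closed_span_finite[OF B]
    by (simp add: closed_Int complete_eq_closed)
  moreover have "S \<noteq> {}" using \<open>0 \<in> S\<close> by blast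
  ultimately have "\<exists>!u\<in>S. f u = u"
    using kappa(1,2) maps by (rule Banach_fix) (simp add: dist_norm contr)
  then obtain u where "u \<in> S" "f u = u" by blast
  then show ?thesis
    using zarantonello_span(2)[OF B, of _ d u] Lc alpha_pos
    unfolding f_def S_def d_def by auto
qed

lemma galerkin_sol_span:
  assumes B: "finite B"
  shows "galerkin_sol A F (span B) \<in> span B"
    and "v \<in> span B \<Longrightarrow> A (galerkin_sol A F (span B)) v = F v"
proof -
  have "\<exists>!u. u \<in> span B \<and> (\<forall>v\<in>span B. A u v = F v)"
  proof (rule ex_ex1I)
    show "\<exists>u. u \<in> span B \<and> (\<forall>v\<in>span B. A u v = F v)"
      using galerkin_exists[OF B] by blast
  next
    fix u u'
    assume "u \<in> span B \<and> (\<forall>v\<in>span B. A u v = F v)"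
      and "u' \<in> span B \<and> (\<forall>v\<in>span B. A u' v = F v)"
    moreover from this have "u - u' \<in> span B" by (simp add: span_diff)
    ultimately have "alpha * (norm (u - u'))\<^sup>2 \<le> 0"
      using SM[of u u'] by simp
    then show "u = u'" using alpha_pos by (simp add: mult_le_0_iff)
  qed
  then have "galerkin_sol A F (span B) \<in> span B \<and>
      (\<forall>v\<in>span B. A (galerkin_sol A F (span B)) v = F v)"
    unfolding galerkin_sol_def by (rule theI')
  then show "galerkin_sol A F (span B) \<in> span B"
    and "v \<in> span B \<Longrightarrow> A (galerkin_sol A F (span B)) v = F v"
    by auto
qed

lemma norm_galerkin_sol_le:
  assumes B: "finite B"
  shows "norm (galerkin_sol A F (span B)) \<le> M_sol"
proof -
  let ?u = "galerkin_sol A F (span B)"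
  have "alpha * (norm ?u)\<^sup>2 \<le> A ?u ?u - A 0 ?u" using SM[of ?u 0] by simp
  also have "\<dots> = F ?u - A 0 ?u" using galerkin_sol_span[OF B] by simp
  also have "\<dots> \<le> alpha * (M_sol * norm ?u)"
    using residual_bound by (simp add: mult.assoc)
  finally have "(norm ?u)\<^sup>2 \<le> M_sol * norm ?u"
    using alpha_pos by simp
  then show ?thesis
    by (rule power2_le_mult_imp_le) (use M_sol_pos in simp)
qed

lemma zarantonello_increment_bounds:
  assumes B: "finite B" and w: "w \<in> span B" and t: "t > 0" "norm (w - u_star B) + norm (u_star B) \<le> t"
    and "d > 0"
  shows "alpha * d * norm (w - u_star B) \<le> norm (zarantonello A F (span B) d w - w)"
    and "norm (zarantonello A F (span B) d w - w) \<le> d * Lip (2 * t) * norm (w - u_star B)"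
proof -
  let ?us = "u_star B"
  define e where "e = zarantonello A F (span B) d w - w"
  have e: "inner e v = d * (A ?us v - A w v)" if "v \<in> span B" for v
    using zarantonello_span(2)[OF B that, of d w] galerkin_sol_span(2)[OF B that]
    by (simp add: e_def inner_diff_left)
  have "e \<in> span B" "w - ?us \<in> span B"
    unfolding e_def using w zarantonello_span(1)[OF B] galerkin_sol_span(1)[OF B]
    by (auto intro: span_diff)
  have "alpha * (norm (w - ?us))\<^sup>2 \<le> A w (w - ?us) - A ?us (w - ?us)" by (rule SM)
  also have "\<dots> = - inner e (w - ?us) / d"
    using e[OF \<open>w - ?us \<in> span B\<close>] \<open>d > 0\<close> by simp
  also have "\<dots> \<le> norm e * norm (w - ?us) / d"
    using Cauchy_Schwarz_ineq2[of e "w - ?us"] \<open>d > 0\<close> by (intro divide_right_mono) auto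
  finally have "(norm (w - ?us))\<^sup>2 \<le> (norm e / (alpha * d)) * norm (w - ?us)"
    using alpha_pos \<open>d > 0\<close> by (simp add: field_simps)
  then have "norm (w - ?us) \<le> norm e / (alpha * d)"
    by (rule power2_le_mult_imp_le) (use alpha_pos \<open>d > 0\<close> in simp)
  then show "alpha * d * norm (w - ?us) \<le> norm (zarantonello A F (span B) d w - w)"
    using alpha_pos \<open>d > 0\<close> by (simp add: e_def field_simps)
  have "max (norm ?us) (norm (?us - w)) \<le> 2 * t"
    using t norm_minus_commute[of ?us w] by (smt (verit) norm_ge_zero)
  then have "A ?us e - A w e \<le> Lip (2 * t) * norm (?us - w) * norm e"
    using t by (intro Lip_bound) auto
  then have "(norm e)\<^sup>2 \<le> d * (Lip (2 * t) * norm (?us - w) * norm e)"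
    using e[OF \<open>e \<in> span B\<close>] \<open>d > 0\<close> by (simp add: power2_norm_eq_inner)
  then have "(norm e)\<^sup>2 \<le> d * Lip (2 * t) * norm (w - ?us) * norm e"
    by (simp add: norm_minus_commute mult.assoc)
  then show "norm (zarantonello A F (span B) d w - w) \<le> d * Lip (2 * t) * norm (w - ?us)"
    unfolding e_def[symmetric]
    by (rule power2_le_mult_imp_le) (use Lip_pos[of "2 * t"] t \<open>d > 0\<close> in simp)
qed

end

locale potential_operator = strongly_monotone_operator +
  fixes P :: "'a \<Rightarrow> real"
  assumes POT: "\<And>v w. ((\<lambda>t. (P (w + t *\<^sub>R v) - P w) / t) \<longlongrightarrow> A w v) (at 0)"
begin

definition energy :: "'a \<Rightarrow> real" where
  "energy v = P v - F v"

lemma energy_has_real_derivative_along_line: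
  "((\<lambda>s. energy (x + s *\<^sub>R d)) has_real_derivative A (x + t *\<^sub>R d) d - F d) (at t)"
proof -
  have "((\<lambda>s. P (x + s *\<^sub>R d)) has_real_derivative A (x + t *\<^sub>R d) d) (at t)"
    unfolding DERIV_def using POT[of "x + t *\<^sub>R d" d] by (simp add: scaleR_add_left add.assoc)
  moreover have "((\<lambda>s. F (x + s *\<^sub>R d)) has_real_derivative F d) (at t)"
    unfolding F_add F_scaleR by (auto intro!: derivative_eq_intros)
  ultimately show ?thesis
    unfolding energy_def by (rule DERIV_diff)
qed

lemma energy_increment_ge:
  "(A x d - F d) + alpha / 2 * (norm d)\<^sup>2 \<le> energy (x + d) - energy x"
proof -
  have "(A x d - F d) + alpha * (norm d)\<^sup>2 / 2 \<le> energy (x + 1 *\<^sub>R d) - energy (x + 0 *\<^sub>R d)"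
  proof (rule deriv_ge_affine_imp_increment_ge[OF energy_has_real_derivative_along_line])
    fix t :: real assume "0 \<le> t" "t \<le> 1"
    have "t * (t * (alpha * (norm d)\<^sup>2)) = alpha * (norm (x + t *\<^sub>R d - x))\<^sup>2"
      by (simp add: power2_eq_square)
    also have "\<dots> \<le> t * (A (x + t *\<^sub>R d) d - A x d)"
      using SM[of "x + t *\<^sub>R d" x] by (simp add: A_scaleR algebra_simps)
    finally have "t * (alpha * (norm d)\<^sup>2) \<le> A (x + t *\<^sub>R d) d - A x d"
      using \<open>0 \<le> t\<close> by (cases "t = 0") auto
    then show "A x d - F d + alpha * (norm d)\<^sup>2 * t \<le> A (x + t *\<^sub>R d) d - F d"
      by (simp add: algebra_simps)
  qed
  then show ?thesis by simp
qed

lemma energy_increment_le: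
  assumes th: "th > 0" and seg: "\<And>t. 0 \<le> t \<Longrightarrow> t \<le> 1 \<Longrightarrow> norm (x + t *\<^sub>R d) \<le> th"
    and "norm d \<le> th"
  shows "energy (x + d) - energy x \<le> (A x d - F d) + Lip th / 2 * (norm d)\<^sup>2"
proof -
  have "energy (x + 1 *\<^sub>R d) - energy (x + 0 *\<^sub>R d) \<le> (A x d - F d) + Lip th * (norm d)\<^sup>2 / 2"
  proof (rule deriv_le_affine_imp_increment_le[OF energy_has_real_derivative_along_line])
    fix t :: real assume t: "0 \<le> t" "t \<le> 1"
    have "t * norm d \<le> norm d"
      using t by (simp add: mult_left_le_one_le)
    then have "norm (t *\<^sub>R d) \<le> th"
      using t \<open>norm d \<le> th\<close> by simp
    then have "A (x + t *\<^sub>R d) d - A x d \<le> Lip th * norm (x + t *\<^sub>R d - x) * norm d"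
      using seg[OF t] by (intro Lip_bound[OF th]) simp
    also have "\<dots> = Lip th * (norm d)\<^sup>2 * t"
      using t by (simp add: power2_eq_square)
    finally show "A (x + t *\<^sub>R d) d - F d \<le> A x d - F d + Lip th * (norm d)\<^sup>2 * t"
      by simp
  qed
  then show ?thesis by simp
qed

lemma energy_galerkin_ge:
  assumes B: "finite B" and "v \<in> span B"
  shows "alpha / 2 * (norm (v - u_star B))\<^sup>2 \<le> energy v - energy (u_star B)"
proof -
  have "A (u_star B) (v - u_star B) = F (v - u_star B)"
    using assms galerkin_sol_span[OF B] by (simp add: span_diff)
  then show ?thesis
    using energy_increment_ge[of "u_star B" "v - u_star B"] by simp
qed

lemma energy_galerkin_le:
  assumes B: "finite B" and "v \<in> span B" and "th > 0"
    and "norm (u_star B) \<le> r" "norm v \<le> r" "r \<le> th" "norm (v - u_star B) \<le> th"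
  shows "energy v - energy (u_star B) \<le> Lip th / 2 * (norm (v - u_star B))\<^sup>2"
proof -
  have "energy (u_star B + (v - u_star B)) - energy (u_star B)
      \<le> (A (u_star B) (v - u_star B) - F (v - u_star B)) + Lip th / 2 * (norm (v - u_star B))\<^sup>2"
    using assms norm_segment_le[of _ "u_star B" r v] by (intro energy_increment_le) force+
  moreover have "A (u_star B) (v - u_star B) = F (v - u_star B)"
    using assms galerkin_sol_span[OF B] by (simp add: span_diff)
  ultimately show ?thesis by simp
qed

lemma energy_zarantonello_step_le:
  assumes B: "finite B" and w: "w \<in> span B" and z: "z \<in> span B" and "d > 0" "th > 0"
    and seg: "\<And>s. 0 \<le> s \<Longrightarrow> s \<le> 1 \<Longrightarrow> norm (w + s *\<^sub>R (z - w)) \<le> th"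
    and "norm (z - w) \<le> th"
  shows "energy z - energy w
    \<le> - ((norm (zarantonello A F (span B) d w - w))\<^sup>2 - (norm (z - zarantonello A F (span B) d w))\<^sup>2)
        / (2 * d) - (1 / d - Lip th) / 2 * (norm (z - w))\<^sup>2"
proof -
  let ?Phi = "zarantonello A F (span B) d w"
  let ?E = "(norm (?Phi - w))\<^sup>2" and ?R = "(norm (z - ?Phi))\<^sup>2" and ?D = "(norm (z - w))\<^sup>2"
  have "energy (w + (z - w)) - energy w \<le> (A w (z - w) - F (z - w)) + Lip th / 2 * ?D"
    using assms by (intro energy_increment_le) auto
  then have increment: "energy z - energy w \<le> (A w (z - w) - F (z - w)) + Lip th / 2 * ?D"
    by simp
  \<comment> \<open>the linear term, via the polarization identity for z - w = (Phi - w) + (z - Phi)\<close>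
  have "inner (?Phi - w) (z - w) = d * (F (z - w) - A w (z - w))"
    using zarantonello_span(2)[OF B, of "z - w" d w] w z by (simp add: span_diff inner_diff_left)
  moreover have "?R = ?D - 2 * inner (?Phi - w) (z - w) + ?E"
    unfolding power2_norm_eq_inner by (simp add: inner_diff_left inner_diff_right inner_commute)
  ultimately have "A w (z - w) - F (z - w) = - ((?D + ?E - ?R) / (2 * d))"
    using \<open>d > 0\<close> by (simp add: field_simps)
  moreover have "- ((?D + ?E - ?R) / (2 * d)) + Lip th / 2 * ?D
      = - (?E - ?R) / (2 * d) - (1 / d - Lip th) / 2 * ?D"
    using \<open>d > 0\<close> by (simp add: field_simps)
  ultimately show ?thesis
    using increment by linarith
qed

lemma inexact_zarantonello_energy_decrease:
  assumes B: "finite B" and w: "w \<in> span B" and z: "z \<in> span B"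
    and t: "t > 0" "norm (w - u_star B) + norm (u_star B) \<le> t"
    and d: "d > 0" "d * Lip (5 * t) < 1" "d * Lip (2 * t) \<le> 2"
    and q: "0 \<le> q" "q \<le> 1 / 3"
    and z_err: "norm (zarantonello A F (span B) d w - z) \<le> q * norm (zarantonello A F (span B) d w - w)"
  shows "energy z - energy w
    \<le> - ((1 / d - Lip (5 * t)) * (1 - q)\<^sup>2 / 2) * (norm (zarantonello A F (span B) d w - w))\<^sup>2"
proof -
  let ?us = "u_star B" and ?Phi = "zarantonello A F (span B) d w"
  define e where "e = ?Phi - w"
  define r where "r = z - ?Phi"
  have r: "norm r \<le> q * norm e"
    using z_err by (simp add: r_def e_def norm_minus_commute)
  have "norm e \<le> d * Lip (2 * t) * norm (w - ?us)"
    unfolding e_def by (rule zarantonello_increment_bounds(2)[OF B w t d(1)])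
  also have "\<dots> \<le> 2 * norm (w - ?us)"
    using d(3) by (intro mult_right_mono) auto
  finally have "norm e \<le> 2 * norm (w - ?us)" .
  moreover have "norm (z - w) \<le> 4 / 3 * norm e"
    using norm_triangle_ineq[of e r] r q mult_right_mono[OF q(2) norm_ge_zero[of e]]
    by (simp add: e_def r_def)
  ultimately have "norm (z - w) \<le> 8 / 3 * t"
    using t(2) norm_ge_zero[of ?us] by linarith
  have "energy z - energy w
      \<le> - ((norm e)\<^sup>2 - (norm r)\<^sup>2) / (2 * d) - (1 / d - Lip (5 * t)) / 2 * (norm (z - w))\<^sup>2"
    unfolding e_def r_def
  proof (rule energy_zarantonello_step_le[OF B w z d(1)])
    show "5 * t > 0" "norm (z - w) \<le> 5 * t"
      using t(1) \<open>norm (z - w) \<le> 8 / 3 * t\<close> by auto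
    fix s :: real assume "0 \<le> s" "s \<le> 1"
    then have "norm (s *\<^sub>R (z - w)) \<le> norm (z - w)"
      by (simp add: mult_left_le_one_le)
    moreover have "norm w \<le> t"
      using t(2) norm_triangle_ineq[of "w - ?us" ?us] by simp
    ultimately show "norm (w + s *\<^sub>R (z - w)) \<le> 5 * t"
      using t(1) \<open>norm (z - w) \<le> 8 / 3 * t\<close> norm_triangle_ineq[of w "s *\<^sub>R (z - w)"] by linarith
  qed
  also have "\<dots> \<le> - (1 / d - Lip (5 * t)) / 2 * (norm (z - w))\<^sup>2"
  proof -
    have "(norm r)\<^sup>2 \<le> (norm e)\<^sup>2"
      using r q mult_left_le_one_le[of "norm e" q] by (intro power_mono) auto
    then have "0 \<le> ((norm e)\<^sup>2 - (norm r)\<^sup>2) / (2 * d)"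
      using d(1) by simp
    then show ?thesis by linarith
  qed
  also have "\<dots> \<le> - (1 / d - Lip (5 * t)) / 2 * ((1 - q)\<^sup>2 * (norm e)\<^sup>2)"
  proof -
    have "(1 - q) * norm e \<le> norm (z - w)"
      using r norm_triangle_ineq4[of "z - w" r] by (simp add: e_def r_def algebra_simps)
    then have "((1 - q) * norm e)\<^sup>2 \<le> (norm (z - w))\<^sup>2"
      by (rule power_mono) (use q in simp)
    moreover have "1 / d - Lip (5 * t) > 0" using d by (simp add: field_simps)
    ultimately show ?thesis by (simp add: power_mult_distrib)
  qed
  also have "\<dots> = - ((1 / d - Lip (5 * t)) * (1 - q)\<^sup>2 / 2) * (norm e)\<^sup>2"
    by (simp add: field_simps)
  finally show ?thesis
    by (simp only: e_def)
qed

definition contraction_factor :: "real \<Rightarrow> real \<Rightarrow> real \<Rightarrow> real" where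
  "contraction_factor t d q = 1 - (1 / d - Lip (5 * t)) * (1 - q)\<^sup>2 * d\<^sup>2 * alpha\<^sup>2 / Lip (2 * t)"

lemma contraction_factor_bounds:
  assumes "t > 0" "d > 0" "d * Lip (5 * t) < 1" "0 \<le> q" "q < 1"
  shows "0 < contraction_factor t d q" and "contraction_factor t d q < 1"
proof -
  define K where "K = (1 / d - Lip (5 * t)) * (1 - q)\<^sup>2 * d\<^sup>2 * alpha\<^sup>2 / Lip (2 * t)"
  have L: "0 < alpha" "alpha \<le> Lip (2 * t)" "alpha \<le> Lip (5 * t)"
    using alpha_pos alpha_le_Lip \<open>t > 0\<close> by auto
  have "1 / d - Lip (5 * t) > 0" using assms by (simp add: field_simps)
  then show "contraction_factor t d q < 1"
    using assms L by (simp add: contraction_factor_def)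
  have step_size: "(1 / d - Lip (5 * t)) * d\<^sup>2 = d * (1 - d * Lip (5 * t))"
    using assms by (simp add: power2_eq_square field_simps)
  have "K = (d * (1 - d * Lip (5 * t))) * (1 - q)\<^sup>2 * (alpha * (alpha / Lip (2 * t)))"
    unfolding K_def step_size[symmetric] by (simp add: power2_eq_square mult_ac)
  also have "\<dots> \<le> d * 1 * alpha"
  proof (intro mult_mono)
    show "d * (1 - d * Lip (5 * t)) \<le> d" "(1 - q)\<^sup>2 \<le> 1"
      using assms L by (auto simp: power_le_one mult_left_le)
    have "alpha / Lip (2 * t) \<le> 1" using L by simp
    then show "alpha * (alpha / Lip (2 * t)) \<le> alpha"
      using L mult_left_le[of "alpha / Lip (2 * t)" alpha] by linarith
  qed (use assms L in auto)
  also have "\<dots> \<le> d * Lip (5 * t)"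
    using assms L by simp
  finally show "0 < contraction_factor t d q"
    using assms unfolding contraction_factor_def K_def[symmetric] by simp
qed

lemma inexact_zarantonello_energy_contraction:
  assumes B: "finite B" and w: "w \<in> span B" and z: "z \<in> span B"
    and t: "t > 0" "norm (w - u_star B) + norm (u_star B) \<le> t"
    and d: "d > 0" "d * Lip (5 * t) < 1" "d * Lip (2 * t) \<le> 2"
    and q: "0 \<le> q" "q \<le> 1 / 3"
    and z_err: "norm (zarantonello A F (span B) d w - z) \<le> q * norm (zarantonello A F (span B) d w - w)"
  shows "energy z - energy (u_star B) \<le> contraction_factor t d q * (energy w - energy (u_star B))"
proof -
  let ?us = "u_star B" and ?e = "norm (zarantonello A F (span B) d w - w)"
  define c where "c = (1 / d - Lip (5 * t)) * (1 - q)\<^sup>2"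
  define K where "K = c * d\<^sup>2 * alpha\<^sup>2 / Lip (2 * t)"
  have "1 / d - Lip (5 * t) > 0" using d by (simp add: field_simps)
  then have c: "c \<ge> 0" by (simp add: c_def)
  have L2: "Lip (2 * t) > 0" using Lip_pos t by simp
  have "energy z - energy w \<le> - (c / 2) * ?e\<^sup>2"
    using inexact_zarantonello_energy_decrease[OF assms] by (simp add: c_def)
  also have "\<dots> \<le> - (c / 2) * ((alpha * d)\<^sup>2 * (norm (w - ?us))\<^sup>2)"
  proof -
    have "(alpha * d * norm (w - ?us))\<^sup>2 \<le> ?e\<^sup>2"
      using zarantonello_increment_bounds(1)[OF B w t d(1)] alpha_pos d(1) by (intro power_mono) auto
    then show ?thesis using c by (simp add: power_mult_distrib mult_left_mono)
  qed
  also have "\<dots> = - K * (Lip (2 * t) / 2 * (norm (w - ?us))\<^sup>2)"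
    using L2 by (simp add: K_def power_mult_distrib)
  also have "\<dots> \<le> - K * (energy w - energy ?us)"
  proof -
    have "norm ?us \<le> t"
      using t(2) norm_ge_zero[of "w - ?us"] by linarith
    moreover have "norm w \<le> t"
      using t(2) norm_triangle_ineq[of "w - ?us" ?us] by simp
    moreover have "norm (w - ?us) \<le> 2 * t"
      using t norm_ge_zero[of ?us] by linarith
    ultimately have "energy w - energy ?us \<le> Lip (2 * t) / 2 * (norm (w - ?us))\<^sup>2"
      using t by (intro energy_galerkin_le[OF B w, of _ t]) auto
    moreover have "K \<ge> 0" using c L2 by (simp add: K_def)
    ultimately have "K * (energy w - energy ?us) \<le> K * (Lip (2 * t) / 2 * (norm (w - ?us))\<^sup>2)"
      by (rule mult_left_mono)
    then show ?thesis by simp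
  qed
  finally have "energy z - energy ?us \<le> (1 - K) * (energy w - energy ?us)"
    by (simp add: left_diff_distrib right_diff_distrib)
  moreover have "contraction_factor t d q = 1 - K"
    by (simp add: contraction_factor_def K_def c_def)
  ultimately show ?thesis by simp
qed

definition tau_iter :: real where
  "tau_iter = M_sol + 3 * M_sol * sqrt (Lip (3 * M_sol) / alpha)"

lemma energy_sublevel_norm_bound:
  assumes B: "finite B" and v: "v \<in> span B" and w0: "w0 \<in> span B" "norm w0 \<le> 2 * M_sol"
    and "energy v \<le> energy w0"
  shows "norm (v - u_star B) + norm (u_star B) \<le> tau_iter"
proof -
  let ?us = "u_star B" and ?L = "Lip (3 * M_sol)"
  have us: "norm ?us \<le> M_sol" by (rule norm_galerkin_sol_le[OF B])
  have "norm (w0 - ?us) \<le> 3 * M_sol"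
    using norm_triangle_ineq4[of w0 ?us] us w0(2) by simp
  then have "energy w0 - energy ?us \<le> ?L / 2 * (norm (w0 - ?us))\<^sup>2"
    using us w0 M_sol_pos by (intro energy_galerkin_le[OF B, of _ _ "2 * M_sol"]) auto
  also have "\<dots> \<le> ?L / 2 * (3 * M_sol)\<^sup>2"
    using \<open>norm (w0 - ?us) \<le> 3 * M_sol\<close> Lip_pos[of "3 * M_sol"] M_sol_pos
    by (intro mult_left_mono power_mono) auto
  finally have "alpha / 2 * (norm (v - ?us))\<^sup>2 \<le> ?L / 2 * (3 * M_sol)\<^sup>2"
    using energy_galerkin_ge[OF B v] \<open>energy v \<le> energy w0\<close> by linarith
  then have "(norm (v - ?us))\<^sup>2 \<le> (3 * M_sol * sqrt (?L / alpha))\<^sup>2"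
    using alpha_pos Lip_pos[of "3 * M_sol"] M_sol_pos by (simp add: field_simps)
  then have "norm (v - ?us) \<le> 3 * M_sol * sqrt (?L / alpha)"
    by (rule power2_le_imp_le) (use M_sol_pos alpha_pos Lip_pos[of "3 * M_sol"] in simp)
  then show ?thesis
    using us unfolding tau_iter_def by simp
qed

lemma inexact_zarantonello_iteration_contraction:
  fixes w :: "nat \<Rightarrow> 'a"
  assumes B: "finite B" and w: "\<And>k. k \<le> K \<Longrightarrow> w k \<in> span B" and w0: "norm (w 0) \<le> 2 * M_sol"
    and q: "0 \<le> q" "q \<le> 1 / 3"
    and d: "0 < d" "d < min (1 / Lip (5 * tau_iter)) (2 * alpha / (Lip (2 * tau_iter))\<^sup>2)"
    and step: "\<And>k. k \<in> {1..K} \<Longrightarrow>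
      norm (zarantonello A F (span B) d (w (k - 1)) - w k)
        \<le> q * norm (zarantonello A F (span B) d (w (k - 1)) - w (k - 1))"
    and k: "k \<in> {1..K}"
  shows "energy (w k) - energy (u_star B)
    \<le> contraction_factor tau_iter d q * (energy (w (k - 1)) - energy (u_star B))"
proof -
  let ?us = "u_star B" and ?qE = "contraction_factor tau_iter d q"
  have tau: "tau_iter > 0"
    using M_sol_pos alpha_pos Lip_pos[of "3 * M_sol"] by (simp add: tau_iter_def add_pos_nonneg)
  have L: "0 < Lip (2 * tau_iter)" "alpha \<le> Lip (2 * tau_iter)" "0 < Lip (5 * tau_iter)"
    using Lip_pos alpha_le_Lip tau by auto
  have d5: "d * Lip (5 * tau_iter) < 1"
    using d L by (simp add: field_simps)
  have "d * Lip (2 * tau_iter) < 2 * alpha / Lip (2 * tau_iter)"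
    using d L by (simp add: field_simps power2_eq_square)
  also have "\<dots> \<le> 2"
    using L by (simp add: field_simps)
  finally have d2: "d * Lip (2 * tau_iter) \<le> 2" by simp
  have qE: "0 < ?qE" "?qE < 1"
    using contraction_factor_bounds[OF tau d(1) d5 q(1)] q(2) by auto
  have contraction: "energy (w j) - energy ?us \<le> ?qE * (energy (w (j - 1)) - energy ?us)"
    if j: "j \<in> {1..K}" and sublevel: "energy (w (j - 1)) \<le> energy (w 0)" for j
  proof (rule inexact_zarantonello_energy_contraction[OF B _ _ tau _ d(1) d5 d2 q step[OF j]])
    show "w (j - 1) \<in> span B" "w j \<in> span B" using j w by auto
    show "norm (w (j - 1) - ?us) + norm ?us \<le> tau_iter"
      using j w w0 sublevel by (intro energy_sublevel_norm_bound[OF B]) auto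
  qed
  \<comment> \<open>the energy decreases along the iteration, so every iterate stays in the tau_iter-ball\<close>
  have "energy (w j) \<le> energy (w 0)" if "j \<le> K" for j
    using that
  proof (induction j)
    case (Suc j)
    have "0 \<le> energy (w j) - energy ?us"
      using energy_galerkin_ge[OF B w[of j]] Suc.prems alpha_pos
      by (smt (verit) Suc_leD divide_nonneg_pos mult_nonneg_nonneg zero_le_power2)
    then have "?qE * (energy (w j) - energy ?us) \<le> energy (w j) - energy ?us"
      using qE by (simp add: mult_left_le_one_le)
    then show ?case
      using contraction[of "Suc j"] Suc by simp
  qed simp
  then show ?thesis
    using k by (intro contraction) auto
qed

lemma energy_contraction_error_bound:
  assumes B: "finite B" and v: "v \<in> span B"
    and contr: "energy v - energy (u_star B) \<le> qE * (energy w - energy (u_star B))"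
    and qE: "0 < qE" "qE < 1"
  shows "alpha * (1 - qE) / (2 * qE) * (norm (v - u_star B))\<^sup>2 \<le> energy w - energy v"
proof -
  have "(1 - qE) * (alpha / 2 * (norm (v - u_star B))\<^sup>2) \<le> (1 - qE) * (energy v - energy (u_star B))"
    using energy_galerkin_ge[OF B v] qE by (intro mult_left_mono) auto
  also have "\<dots> \<le> qE * (energy w - energy v)"
    using contr by (simp add: algebra_simps)
  finally show ?thesis
    using qE by (simp add: field_simps)
qed

end

locale ailfem_trace =
  fixes T0 :: 'm and elems :: "'m \<Rightarrow> 't set" and refine :: "'m \<Rightarrow> 't set \<Rightarrow> 'm"
    and eta :: "'m \<Rightarrow> 't \<Rightarrow> 'a::real_inner \<Rightarrow> real" and Psi :: "'m \<Rightarrow> ('a \<Rightarrow> real) \<Rightarrow> 'a \<Rightarrow> 'a"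
    and A :: "'a \<Rightarrow> 'a \<Rightarrow> real" and F P :: "'a \<Rightarrow> real"
    and delta theta Cmark lam_lin lam_alg :: real and imin :: nat and Mb :: real and u00 :: 'a
    and Tm :: "nat \<Rightarrow> 'm" and Mk :: "nat \<Rightarrow> 't set" and u :: "nat \<Rightarrow> nat \<Rightarrow> nat \<Rightarrow> 'a"
    and kbar :: "nat \<Rightarrow> nat" and ibar :: "nat \<Rightarrow> nat \<Rightarrow> nat" and L :: nat
  assumes run: "ailfem_run T0 elems refine eta Psi A F P delta theta Cmark lam_lin lam_alg imin Mb u00
    Tm Mk u kbar ibar L"
begin

abbreviation u_stop :: "nat \<Rightarrow> nat \<Rightarrow> 'a" where
  "u_stop l k \<equiv> u l k (ibar l k)"

lemma
  shows Tm_0: "Tm 0 = T0"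
    and u_000: "u 0 0 0 = u00"
    and u_next_level: "l < L \<Longrightarrow> u (Suc l) 0 0 = u_stop l (kbar l)"
    and ibar_0: "l \<le> L \<Longrightarrow> ibar l 0 = 0"
    and kbar_pos: "l \<le> L \<Longrightarrow> 1 \<le> kbar l"
    and u_step_start: "l \<le> L \<Longrightarrow> k \<in> {1..kbar l} \<Longrightarrow> u l k 0 = u_stop l (k - 1)"
    and u_inner_step: "l \<le> L \<Longrightarrow> k \<in> {1..kbar l} \<Longrightarrow> i \<in> {1..ibar l k} \<Longrightarrow>
      u l k i = Psi (Tm l) (zar_rhs A F delta (u_stop l (k - 1))) (u l k (i - 1))"
    and ibar_ge: "l \<le> L \<Longrightarrow> k \<in> {1..kbar l} \<Longrightarrow> imin \<le> ibar l k"
    and stopping_criterion: "l \<le> L \<Longrightarrow>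
      P (u_stop l (kbar l - 1)) - F (u_stop l (kbar l - 1)) - (P (u_stop l (kbar l)) - F (u_stop l (kbar l)))
        \<le> lam_lin\<^sup>2 * (eta_set eta (Tm l) (elems (Tm l)) (u_stop l (kbar l)))\<^sup>2
      \<and> norm (u_stop l (kbar l)) \<le> 2 * Mb"
    and Tm_Suc: "l < L \<Longrightarrow> Mk l \<subseteq> elems (Tm l) \<and> Tm (Suc l) = refine (Tm l) (Mk l)"
proof -
  note R = run[unfolded ailfem_run_def Let_def]
  show "Tm 0 = T0" "u 0 0 0 = u00" using R by blast+
  show "l < L \<Longrightarrow> u (Suc l) 0 0 = u_stop l (kbar l)" using R by blast
  show "l \<le> L \<Longrightarrow> ibar l 0 = 0" "l \<le> L \<Longrightarrow> 1 \<le> kbar l" using R by blast+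
  show "l \<le> L \<Longrightarrow> k \<in> {1..kbar l} \<Longrightarrow> u l k 0 = u_stop l (k - 1)" using R by blast
  show "l \<le> L \<Longrightarrow> k \<in> {1..kbar l} \<Longrightarrow> i \<in> {1..ibar l k} \<Longrightarrow>
      u l k i = Psi (Tm l) (zar_rhs A F delta (u_stop l (k - 1))) (u l k (i - 1))"
    using R by blast
  show "l \<le> L \<Longrightarrow> k \<in> {1..kbar l} \<Longrightarrow> imin \<le> ibar l k"
  proof -
    assume "l \<le> L" "k \<in> {1..kbar l}"
    moreover from this have "ibar l k \<in> {1..ibar l k}" using R by auto
    ultimately show "imin \<le> ibar l k" using R by blast
  qed
  show "l \<le> L \<Longrightarrow> P (u_stop l (kbar l - 1)) - F (u_stop l (kbar l - 1))
      - (P (u_stop l (kbar l)) - F (u_stop l (kbar l)))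
        \<le> lam_lin\<^sup>2 * (eta_set eta (Tm l) (elems (Tm l)) (u_stop l (kbar l)))\<^sup>2
      \<and> norm (u_stop l (kbar l)) \<le> 2 * Mb"
  proof -
    assume "l \<le> L"
    moreover from this have "kbar l \<in> {1..kbar l}" using R by auto
    ultimately show ?thesis using R by (metis (no_types, lifting))
  qed
  show "l < L \<Longrightarrow> Mk l \<subseteq> elems (Tm l) \<and> Tm (Suc l) = refine (Tm l) (Mk l)" using R by blast
qed

lemma Tm_refines: "l \<le> L \<Longrightarrow> refines refine elems T0 (Tm l)"
proof (induction l)
  case 0
  then show ?case using Tm_0 refines.refl by simp
next
  case (Suc l)
  then show ?case
    using refines.step[OF Suc.IH] Tm_Suc[of l] by simp
qed

lemma iterate_mem:
  fixes XS :: "'m \<Rightarrow> 'a set"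
  assumes Psi_maps: "\<And>H phi w. refines refine elems T0 H \<Longrightarrow> w \<in> XS H \<Longrightarrow> Psi H phi w \<in> XS H"
    and XS_nested: "\<And>H h. refines refine elems T0 H \<Longrightarrow> refines refine elems H h \<Longrightarrow> XS H \<subseteq> XS h"
    and "u00 \<in> XS T0" and l: "l \<le> L"
  shows "k \<le> kbar l \<Longrightarrow> i \<le> ibar l k \<Longrightarrow> u l k i \<in> XS (Tm l)"
proof -
  have level: "u l k i \<in> XS (Tm l)"
    if l: "l \<le> L" and start: "u l 0 0 \<in> XS (Tm l)" and "k \<le> kbar l" "i \<le> ibar l k" for l k i
    using that(3,4)
  proof (induction k arbitrary: i)
    case 0
    then show ?case using ibar_0[OF l] start by simp
  next
    case (Suc k)
    have k: "Suc k \<in> {1..kbar l}" using Suc.prems by simp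
    show ?case
      using Suc.prems(2)
    proof (induction i)
      case 0
      then show ?case using u_step_start[OF l k] Suc.IH[of "ibar l k"] Suc.prems by simp
    next
      case (Suc i)
      then show ?case
        using u_inner_step[OF l k, of "Suc i"] Psi_maps[OF Tm_refines[OF l]] by simp
    qed
  qed
  have start: "u l 0 0 \<in> XS (Tm l)" if "l \<le> L" for l
    using that
  proof (induction l)
    case 0
    then show ?case using Tm_0 u_000 \<open>u00 \<in> XS T0\<close> by simp
  next
    case (Suc l)
    then have "u_stop l (kbar l) \<in> XS (Tm l)"
      by (auto intro!: level[OF _ Suc.IH])
    moreover have "XS (Tm l) \<subseteq> XS (Tm (Suc l))"
      using Suc.prems Tm_Suc[of l] Tm_refines[of l]
      by (intro XS_nested) (auto intro: refines.step[OF refines.refl])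
    ultimately show ?case using u_next_level[of l] Suc.prems by auto
  qed
  show "k \<le> kbar l \<Longrightarrow> i \<le> ibar l k \<Longrightarrow> u l k i \<in> XS (Tm l)"
    by (rule level[OF l start[OF l]])
qed

lemma start_norm_le:
  assumes "norm u00 \<le> 2 * Mb" and "l \<le> L"
  shows "norm (u l 0 0) \<le> 2 * Mb"
proof (cases l)
  case 0
  then show ?thesis using u_000 assms(1) by simp
next
  case (Suc l')
  then show ?thesis
    using u_next_level[of l'] stopping_criterion[of l'] assms(2) by simp
qed

lemma outer_step_algebraic_error:
  fixes XS :: "'m \<Rightarrow> 'a set"
  assumes Psi_maps: "\<And>H phi w. refines refine elems T0 H \<Longrightarrow> w \<in> XS H \<Longrightarrow> Psi H phi w \<in> XS H"
    and XS_nested: "\<And>H h. refines refine elems T0 H \<Longrightarrow> refines refine elems H h \<Longrightarrow> XS H \<subseteq> XS h"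
    and u00: "u00 \<in> XS T0"
    and Psi_contr: "\<And>H phi w. refines refine elems T0 H \<Longrightarrow> bounded_linear phi \<Longrightarrow> w \<in> XS H \<Longrightarrow>
       norm (riesz_sol (XS H) phi - Psi H phi w) \<le> qalg * norm (riesz_sol (XS H) phi - w)"
    and qalg: "0 \<le> qalg" "qalg \<le> 1"
    and rhs: "bounded_linear (zar_rhs A F delta (u_stop l (k - 1)))"
    and l: "l \<le> L" and k: "k \<in> {1..kbar l}"
  shows "norm (riesz_sol (XS (Tm l)) (zar_rhs A F delta (u_stop l (k - 1))) - u_stop l k)
    \<le> qalg ^ imin * norm (riesz_sol (XS (Tm l)) (zar_rhs A F delta (u_stop l (k - 1))) - u_stop l (k - 1))"
proof -
  let ?Phi = "riesz_sol (XS (Tm l)) (zar_rhs A F delta (u_stop l (k - 1)))"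
  have "norm (?Phi - u l k i) \<le> qalg ^ i * norm (?Phi - u_stop l (k - 1))" if "i \<le> ibar l k" for i
    using that
  proof (induction i)
    case 0
    then show ?case using u_step_start[OF l k] by simp
  next
    case (Suc i)
    have "u l k i \<in> XS (Tm l)"
      using iterate_mem[OF Psi_maps XS_nested u00 l, of k i] Suc.prems k by simp
    then have "norm (?Phi - Psi (Tm l) (zar_rhs A F delta (u_stop l (k - 1))) (u l k i))
        \<le> qalg * norm (?Phi - u l k i)"
      by (rule Psi_contr[OF Tm_refines[OF l] rhs])
    then have "norm (?Phi - u l k (Suc i)) \<le> qalg * norm (?Phi - u l k i)"
      using u_inner_step[OF l k, of "Suc i"] Suc.prems by simp
    also have "\<dots> \<le> qalg * (qalg ^ i * norm (?Phi - u_stop l (k - 1)))"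
      using Suc qalg by (intro mult_left_mono) auto
    finally show ?case by simp
  qed
  moreover have "qalg ^ ibar l k \<le> qalg ^ imin"
    using qalg ibar_ge[OF l k] by (intro power_decreasing) auto
  ultimately show ?thesis
    by (meson mult_right_mono norm_ge_zero order.trans order_refl)
qed

end

locale ailfem = potential_operator A F alpha Lip P +
  ailfem_trace T0 elems refine eta Psi A F P delta theta Cmark lam_lin lam_alg imin Mb u00
    Tm Mk u kbar ibar L
  for A :: "'a::{real_inner, complete_space} \<Rightarrow> 'a \<Rightarrow> real" and F alpha Lip P
    and T0 :: 'm and elems :: "'m \<Rightarrow> 't set" and refine eta Psi delta theta Cmark lam_lin lam_alg
    imin Mb u00 Tm Mk u kbar ibar L +
  fixes XS :: "'m \<Rightarrow> 'a set" and qalg :: real and Cstab :: "real \<Rightarrow> real"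
  assumes XS_fin_dim: "\<And>H. refines refine elems T0 H \<Longrightarrow> \<exists>B. finite B \<and> XS H = span B"
    and XS_nested: "\<And>H h. refines refine elems T0 H \<Longrightarrow> refines refine elems H h \<Longrightarrow> XS H \<subseteq> XS h"
    and Psi_maps: "\<And>H phi w. refines refine elems T0 H \<Longrightarrow> w \<in> XS H \<Longrightarrow> Psi H phi w \<in> XS H"
    and Psi_contr: "\<And>H phi w. refines refine elems T0 H \<Longrightarrow> bounded_linear phi \<Longrightarrow> w \<in> XS H \<Longrightarrow>
       norm (riesz_sol (XS H) phi - Psi H phi w) \<le> qalg * norm (riesz_sol (XS H) phi - w)"
    and qalg: "0 < qalg" "qalg < 1" "qalg ^ imin \<le> 1 / 3"
    and Mb_eq: "Mb = M_sol"
    and delta: "0 < delta" "delta < min (1 / Lip (5 * tau_iter)) (2 * alpha / (Lip (2 * tau_iter))\<^sup>2)"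
    and u00: "u00 \<in> XS T0" "norm u00 \<le> 2 * Mb"
    and lam_lin_pos: "lam_lin > 0"
    and A1: "\<And>th. th > 0 \<Longrightarrow> Cstab th > 0 \<and>
       (\<forall>H h U vh vH. refines refine elems T0 H \<longrightarrow> refines refine elems H h \<longrightarrow>
          U \<subseteq> elems h \<inter> elems H \<longrightarrow> vh \<in> XS h \<longrightarrow> vH \<in> XS H \<longrightarrow>
          max (norm vh) (norm (vh - vH)) \<le> th \<longrightarrow>
          \<bar>eta_set eta h U vh - eta_set eta H U vH\<bar> \<le> Cstab th * norm (vh - vH))"
begin

abbreviation qE :: real where
  "qE \<equiv> contraction_factor tau_iter delta (qalg ^ imin)"

lemma qE_bounds: "0 < qE" "qE < 1"
proof -
  have tau: "tau_iter > 0"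
    using M_sol_pos alpha_pos Lip_pos[of "3 * M_sol"] by (simp add: tau_iter_def add_pos_nonneg)
  have "delta * Lip (5 * tau_iter) < 1"
    using delta Lip_pos[OF mult_pos_pos[OF _ tau], of 5] by (simp add: field_simps)
  then show "0 < qE" "qE < 1"
    using contraction_factor_bounds[OF tau delta(1)] qalg by auto
qed

lemma final_iterate_error:
  assumes B: "finite B" "XS (Tm L) = span B"
  shows "alpha * (1 - qE) / (2 * qE) * (norm (u_stop L (kbar L) - u_star B))\<^sup>2
    \<le> lam_lin\<^sup>2 * (eta_set eta (Tm L) (elems (Tm L)) (u_stop L (kbar L)))\<^sup>2"
proof -
  let ?K = "kbar L"
  have mem: "u_stop L k \<in> span B" if "k \<le> ?K" for k
    using iterate_mem[OF Psi_maps XS_nested u00(1) order_refl that order_refl] B(2) by simp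
  have start: "norm (u_stop L 0) \<le> 2 * M_sol"
    using start_norm_le[OF u00(2) order_refl] ibar_0[of L] Mb_eq by simp
  have step: "norm (zarantonello A F (span B) delta (u_stop L (k - 1)) - u_stop L k)
      \<le> qalg ^ imin * norm (zarantonello A F (span B) delta (u_stop L (k - 1)) - u_stop L (k - 1))"
    if "k \<in> {1..?K}" for k
    using outer_step_algebraic_error[OF Psi_maps XS_nested u00(1) Psi_contr _ _
        zar_rhs_bounded_linear[OF A_dual F_dual] order_refl that] qalg
    unfolding zarantonello_def B(2) by simp
  have K: "?K \<in> {1..?K}" using kbar_pos[of L] by simp
  have "energy (u_stop L ?K) - energy (u_star B) \<le> qE * (energy (u_stop L (?K - 1)) - energy (u_star B))"
    by (rule inexact_zarantonello_iteration_contraction[where w = "u_stop L" and K = ?K,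
          OF B(1) mem start _ _ _ _ step K])
      (use qalg delta in auto)
  then have "alpha * (1 - qE) / (2 * qE) * (norm (u_stop L ?K - u_star B))\<^sup>2
      \<le> energy (u_stop L (?K - 1)) - energy (u_stop L ?K)"
    by (rule energy_contraction_error_bound[OF B(1) mem[OF order_refl]]) (fact qE_bounds)+
  also have "\<dots> \<le> lam_lin\<^sup>2 * (eta_set eta (Tm L) (elems (Tm L)) (u_stop L ?K))\<^sup>2"
    using stopping_criterion[of L] by (simp add: energy_def)
  finally show ?thesis .
qed

definition lam_lin_star :: real where
  "lam_lin_star = min 1 (sqrt (alpha * (1 - qE) / (2 * qE)) / Cstab (3 * M_sol))"

lemma lam_lin_star_pos: "lam_lin_star > 0"
  using qE_bounds alpha_pos A1[of "3 * M_sol"] M_sol_pos by (simp add: lam_lin_star_def)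

lemma estimator_perturbation:
  assumes B: "finite B" "XS (Tm L) = span B" and U: "U \<subseteq> elems (Tm L)"
  shows "\<bar>eta_set eta (Tm L) U (u_star B) - eta_set eta (Tm L) U (u_stop L (kbar L))\<bar>
    \<le> lam_lin / lam_lin_star * eta_set eta (Tm L) (elems (Tm L)) (u_stop L (kbar L))"
proof -
  let ?us = "u_star B" and ?uL = "u_stop L (kbar L)" and ?C = "Cstab (3 * M_sol)"
  let ?e = "eta_set eta (Tm L) (elems (Tm L)) ?uL"
  define S where "S = sqrt (alpha * (1 - qE) / (2 * qE))"
  have S: "0 < S" "S\<^sup>2 = alpha * (1 - qE) / (2 * qE)"
    using qE_bounds alpha_pos by (simp_all add: S_def)
  have C: "?C > 0" and A1_3M: "\<forall>H h U vh vH. refines refine elems T0 H \<longrightarrow>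
      refines refine elems H h \<longrightarrow> U \<subseteq> elems h \<inter> elems H \<longrightarrow> vh \<in> XS h \<longrightarrow> vH \<in> XS H \<longrightarrow>
      max (norm vh) (norm (vh - vH)) \<le> 3 * M_sol \<longrightarrow>
      \<bar>eta_set eta h U vh - eta_set eta H U vH\<bar> \<le> ?C * norm (vh - vH)"
    using A1[of "3 * M_sol"] M_sol_pos by auto
  have e: "0 \<le> lam_lin * ?e"
    using lam_lin_pos by (simp add: eta_set_def sum_nonneg)
  have "(S * norm (?uL - ?us))\<^sup>2 \<le> (lam_lin * ?e)\<^sup>2"
    using final_iterate_error[OF B] S(2) by (simp add: power_mult_distrib)
  then have "S * norm (?uL - ?us) \<le> lam_lin * ?e"
    by (rule power2_le_imp_le) (rule e)
  then have "?C * norm (?uL - ?us) \<le> lam_lin * ?e / lam_lin_star"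
    unfolding lam_lin_star_def S_def[symmetric] using S(1) C e by (rule mult_le_div_min_one)
  moreover have "\<bar>eta_set eta (Tm L) U ?us - eta_set eta (Tm L) U ?uL\<bar> \<le> ?C * norm (?us - ?uL)"
  proof -
    have "?us \<in> XS (Tm L)" "?uL \<in> XS (Tm L)" "norm ?us \<le> M_sol" "norm ?uL \<le> 2 * M_sol"
      using galerkin_sol_span(1)[OF B(1)] iterate_mem[OF Psi_maps XS_nested u00(1) order_refl]
        norm_galerkin_sol_le[OF B(1)] stopping_criterion[of L] B(2) Mb_eq
      by auto
    moreover from this have "norm (?us - ?uL) \<le> 3 * M_sol"
      using norm_triangle_ineq4[of ?us ?uL] by linarith
    ultimately show ?thesis
      using U M_sol_pos by (intro A1_3M[rule_format, OF Tm_refines[OF order_refl] refines.refl]) auto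
  qed
  ultimately show ?thesis
    by (simp add: norm_minus_commute)
qed

end

theorem lemma12:
  fixes A :: "'a::{real_inner, complete_space} \<Rightarrow> 'a \<Rightarrow> real"
    and F :: "'a \<Rightarrow> real" and P :: "'a \<Rightarrow> real"
    and alpha :: real and Lip :: "real \<Rightarrow> real" and Cstab :: "real \<Rightarrow> real"
    and T0 :: 'm and elems :: "'m \<Rightarrow> 't set" and refine :: "'m \<Rightarrow> 't set \<Rightarrow> 'm"
    and XS :: "'m \<Rightarrow> 'a set" and eta :: "'m \<Rightarrow> 't \<Rightarrow> 'a \<Rightarrow> real"
    and Psi :: "'m \<Rightarrow> ('a \<Rightarrow> real) \<Rightarrow> 'a \<Rightarrow> 'a" and qalg :: real
    and delta theta Cmark lam_lin lam_alg :: real and imin :: nat and u00 :: 'a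
    and Tm :: "nat \<Rightarrow> 'm" and Mk :: "nat \<Rightarrow> 't set" and u :: "nat \<Rightarrow> nat \<Rightarrow> nat \<Rightarrow> 'a"
    and kbar :: "nat \<Rightarrow> nat" and ibar :: "nat \<Rightarrow> nat \<Rightarrow> nat" and L :: nat
    and Mb tau qE2 lam_star theta_mark :: real
  \<comment> \<open>operator A : X \<rightarrow> X', right-hand side F \<in> X', A 0 \<noteq> F\<close>
  assumes A_dual: "\<And>v. bounded_linear (A v)"
    and F_dual: "bounded_linear F"
    and A0F: "A 0 \<noteq> F"
  \<comment> \<open>(SM)\<close>
    and SM_alpha: "alpha > 0"
    and SM: "\<And>v w. alpha * (norm (v - w))\<^sup>2 \<le> A v (v - w) - A w (v - w)"
  \<comment> \<open>(LIP)\<close>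
    and LIP: "\<And>th. th > 0 \<Longrightarrow> Lip th > 0 \<and>
       (\<forall>v w phi. max (norm v) (norm (v - w)) \<le> th \<longrightarrow>
          A v phi - A w phi \<le> Lip th * norm (v - w) * norm phi)"
  \<comment> \<open>(POT)\<close>
    and POT: "\<And>v w. ((\<lambda>t. (P (w + t *\<^sub>R v) - P w) / t) \<longlongrightarrow> A w v) (at 0)"
  \<comment> \<open>meshes and discrete spaces\<close>
    and elems_finite: "\<And>H. refines refine elems T0 H \<Longrightarrow> finite (elems H)"
    and XS_fin_dim: "\<And>H. refines refine elems T0 H \<Longrightarrow> \<exists>B. finite B \<and> XS H = span B"
    and XS_nested: "\<And>H h. refines refine elems T0 H \<Longrightarrow> refines refine elems H h \<Longrightarrow> XS H \<subseteq> XS h"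
  \<comment> \<open>algebraic solver\<close>
    and qalg: "0 < qalg" "qalg < 1"
    and Psi_maps: "\<And>H phi w. refines refine elems T0 H \<Longrightarrow> w \<in> XS H \<Longrightarrow> Psi H phi w \<in> XS H"
    and Psi_contr: "\<And>H phi w. refines refine elems T0 H \<Longrightarrow> bounded_linear phi \<Longrightarrow> w \<in> XS H \<Longrightarrow>
       norm (riesz_sol (XS H) phi - Psi H phi w) \<le> qalg * norm (riesz_sol (XS H) phi - w)"
  \<comment> \<open>estimator and stability axiom (A1)\<close>
    and eta_nonneg: "\<And>H T v. eta H T v \<ge> 0"
    and A1: "\<And>th. th > 0 \<Longrightarrow> Cstab th > 0 \<and>
       (\<forall>H h U vh vH. refines refine elems T0 H \<longrightarrow> refines refine elems H h \<longrightarrow>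
          U \<subseteq> elems h \<inter> elems H \<longrightarrow> vh \<in> XS h \<longrightarrow> vH \<in> XS H \<longrightarrow>
          max (norm vh) (norm (vh - vH)) \<le> th \<longrightarrow>
          \<bar>eta_set eta h U vh - eta_set eta H U vH\<bar> \<le> Cstab th * norm (vh - vH))"
  \<comment> \<open>constants\<close>
    and Mb_def: "Mb = onorm (\<lambda>v. F v - A 0 v) / alpha"
    and tau_def: "tau = Mb + 3 * Mb * sqrt (Lip (3 * Mb) / alpha)"
    and imin: "qalg ^ imin \<le> 1 / 3"
    and delta: "0 < delta" "delta < min (1 / Lip (5 * tau)) (2 * alpha / (Lip (2 * tau))\<^sup>2)"
    and qE2_def: "qE2 = 1 - (1 / delta - Lip (5 * tau)) * (1 - qalg ^ imin)\<^sup>2 * delta\<^sup>2 * alpha\<^sup>2 / Lip (2 * tau)"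
    and lam_star_def: "lam_star = min 1 (sqrt (alpha * (1 - qE2) / (2 * qE2)) / Cstab (3 * Mb))"
    and theta_mark_def: "theta_mark = (sqrt theta + lam_lin / lam_star)\<^sup>2 / (1 - lam_lin / lam_star)\<^sup>2"
  \<comment> \<open>algorithm parameters and the run\<close>
    and theta: "0 < theta" "theta \<le> 1"
    and Cmark: "Cmark \<ge> 1"
    and lam: "lam_lin > 0" "lam_alg > 0"
    and u00: "u00 \<in> XS T0" "norm u00 \<le> 2 * Mb"
    and run: "ailfem_run T0 elems refine eta Psi A F P delta theta Cmark lam_lin lam_alg imin Mb u00
                Tm Mk u kbar ibar L"
  shows
    "eta_set eta (Tm L) (elems (Tm L)) (galerkin_sol A F (XS (Tm L)))
       \<le> (1 + lam_lin / lam_star) * eta_set eta (Tm L) (elems (Tm L)) (u L (kbar L) (ibar L (kbar L)))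
     \<and> (lam_lin < lam_star \<longrightarrow>
          (1 - lam_lin / lam_star) * eta_set eta (Tm L) (elems (Tm L)) (u L (kbar L) (ibar L (kbar L)))
            \<le> eta_set eta (Tm L) (elems (Tm L)) (galerkin_sol A F (XS (Tm L))))
     \<and> (lam_lin < lam_star \<longrightarrow>
          (\<forall>R. R \<subseteq> elems (Tm L) \<longrightarrow>
             theta_mark * (eta_set eta (Tm L) (elems (Tm L)) (galerkin_sol A F (XS (Tm L))))\<^sup>2
               \<le> (eta_set eta (Tm L) R (galerkin_sol A F (XS (Tm L))))\<^sup>2 \<longrightarrow>
             theta * (eta_set eta (Tm L) (elems (Tm L)) (u L (kbar L) (ibar L (kbar L))))\<^sup>2
               \<le> (eta_set eta (Tm L) R (u L (kbar L) (ibar L (kbar L))))\<^sup>2))"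
proof -
  interpret potential_operator A F alpha Lip P
    by (intro potential_operator.intro strongly_monotone_operator.intro potential_operator_axioms.intro)
      (fact A_dual F_dual A0F SM_alpha SM LIP POT)+
  have Mb: "Mb = M_sol" by (simp add: Mb_def M_sol_def)
  have tau: "tau = tau_iter" by (simp add: tau_def tau_iter_def Mb)
  interpret ailfem A F alpha Lip P T0 elems refine eta Psi delta theta Cmark lam_lin lam_alg imin Mb u00
      Tm Mk u kbar ibar L XS qalg Cstab
    using run XS_fin_dim XS_nested Psi_maps Psi_contr qalg imin Mb delta u00 lam(1) A1
    unfolding tau by unfold_locales auto
  have lam_star: "lam_star = lam_lin_star"
    by (simp add: lam_star_def lam_lin_star_def qE2_def contraction_factor_def tau Mb)
  obtain B where B: "finite B" "XS (Tm L) = span B"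
    using XS_fin_dim[OF Tm_refines[OF order_refl]] by blast
  define est where "est U v = eta_set eta (Tm L) U v" for U v
  define a where "a = lam_lin / lam_star"
  let ?uL = "u_stop L (kbar L)" and ?T = "elems (Tm L)"
  have stab: "\<bar>est U (u_star B) - est U ?uL\<bar> \<le> a * est ?T ?uL" if "U \<subseteq> ?T" for U
    using estimator_perturbation[OF B that] by (simp add: est_def a_def lam_star)
  have a: "0 \<le> a" "a < 1 \<longleftrightarrow> lam_lin < lam_star"
    using lam lam_lin_star_pos by (simp_all add: a_def lam_star)
  have est_nonneg: "0 \<le> est U v" for U v
    by (simp add: est_def eta_set_def sum_nonneg)
  have "theta_mark = ((sqrt theta + a) / (1 - a))\<^sup>2"
    by (simp add: theta_mark_def a_def power_divide)
  then have "theta * (est ?T ?uL)\<^sup>2 \<le> (est R ?uL)\<^sup>2" if "lam_lin < lam_star" "R \<subseteq> ?T"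
      and "theta_mark * (est ?T (u_star B))\<^sup>2 \<le> (est R (u_star B))\<^sup>2" for R
    using that stab a theta est_nonneg
    by (intro doerfler_marking_transfer[of ?T "\<lambda>U. est U (u_star B)" "\<lambda>U. est U ?uL" a R]) auto
  moreover have "est ?T (u_star B) \<le> (1 + a) * est ?T ?uL" "(1 - a) * est ?T ?uL \<le> est ?T (u_star B)"
    using stab[of ?T] by (simp_all add: algebra_simps)
  ultimately show ?thesis
    unfolding B(2) est_def[symmetric] a_def[symmetric] by auto
qed

end
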